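(* Let $\mathbb{G}$ be a homogeneous group of homogeneous dimension $Q\geq3$ and $|\cdot|$ a homogeneous quasi-norm. Let $2\leq p<Q$ and $-\infty<\alpha<\frac{Q-p}{p}$. Set $f_\alpha(x)=|x|^{-\frac{Q-p-\alpha p}{p}}$ and, for $R>0$ and functions $u,v$ for which the integral is finite, $$d_R(u,v)=\left(\int_{\mathbb{G}}\frac{|u(x)-v(x)|^p}{\left|\log\frac{R}{|x|}\right|^p|x|^{(\alpha+1)p}}dx\right)^{1/p}.$$ Then for every radial $f\in C_0^\infty(\mathbb{G}\setminus\{0\})$, written $f(x)=\tilde f(|x|)$, $$\int_{\mathbb{G}}\frac{|\mathcal{R}f|^p}{|x|^{\alpha p}}dx-\left(\frac{Q-p-\alpha p}{p}\right)^p\int_{\mathbb{G}}\frac{|f|^p}{|x|^{(\alpha+1)p}}dx\geq c_p\left(\frac{p-1}{p}\right)^p\sup_{R>0}d_R\big(f,c_f(R)f_\alpha\big)^p,$$ where $c_f(R)=R^{\frac{Q-p-\alpha p}{p}}\tilde f(R)$ and $c_p=\min_{0<t\leq1/2}\left((1-t)^p-t^p+pt^{p-1}\right)$.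
   Context: A homogeneous group is a connected simply connected Lie group $\mathbb{G}$ with dilations $x\mapsto\lambda x$ induced by $D_\lambda=\mathrm{Exp}(A\ln\lambda)$ on its Lie algebra ($A$ diagonalisable with positive eigenvalues, $D_\lambda$ Lie algebra automorphisms), and homogeneous dimension $Q=\mathrm{Tr}\,A$. A homogeneous quasi-norm is a continuous nonnegative function $|\cdot|$, vanishing only at $0$, with $|x^{-1}|=|x|$, $|\lambda x|=\lambda|x|$. A function is radial if it depends only on $|x|$. Writing $x=ry$, $r=|x|$, $|y|=1$, the radial derivative is $\mathcal{R}f(x)=\frac{d}{dr}f(ry)$. Integrals are with respect to Haar measure. *)

theory Defs
  imports "HOL-Analysis.Analysis"
begin

text \<open>A homogeneous group is modelled in exponential coordinates on a Euclidean
space 'a (identified with its Lie algebra via Exp): identity 0, inverse uminus,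
group law gmul, dilations diagonal in the basis Basis with positive weights nu,
so that the dilation matrix A = diag(nu) and Q = Tr A.\<close>

definition dil :: "('a::euclidean_space \<Rightarrow> real) \<Rightarrow> real \<Rightarrow> 'a \<Rightarrow> 'a" where
  "dil nu l x = (\<Sum>b\<in>Basis. (l powr nu b * (x \<bullet> b)) *\<^sub>R b)"

definition hom_dim :: "('a::euclidean_space \<Rightarrow> real) \<Rightarrow> real" where
  "hom_dim nu = (\<Sum>b\<in>(Basis::'a set). nu b)"

definition homogeneous_group :: "('a::euclidean_space \<Rightarrow> 'a \<Rightarrow> 'a) \<Rightarrow> ('a \<Rightarrow> real) \<Rightarrow> bool" where
  "homogeneous_group gmul nu \<longleftrightarrow>
     (\<forall>x y z. gmul (gmul x y) z = gmul x (gmul y z)) \<and>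
     (\<forall>x. gmul 0 x = x \<and> gmul x 0 = x) \<and>
     (\<forall>x. gmul x (- x) = 0 \<and> gmul (- x) x = 0) \<and>
     continuous_on UNIV (\<lambda>(x, y). gmul x y) \<and>
     (\<forall>b\<in>Basis. nu b > 0) \<and>
     (\<forall>l>0. \<forall>x y. dil nu l (gmul x y) = gmul (dil nu l x) (dil nu l y)) \<and>
     (\<forall>x. distr lborel lborel (gmul x) = lborel)"

definition hom_quasi_norm :: "('a::euclidean_space \<Rightarrow> real) \<Rightarrow> ('a \<Rightarrow> real) \<Rightarrow> bool" where
  "hom_quasi_norm nu N \<longleftrightarrow>
     continuous_on UNIV N \<and> (\<forall>x. N x \<ge> 0) \<and> (\<forall>x. N x = 0 \<longleftrightarrow> x = 0) \<and>
     (\<forall>x. N (- x) = N x) \<and> (\<forall>l>0. \<forall>x. N (dil nu l x) = l * N x)"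

text \<open>Radial derivative: writing x = r y with r = N x, N y = 1, R f x = d/dr f(r y).\<close>
definition radial_deriv :: "('a::euclidean_space \<Rightarrow> real) \<Rightarrow> ('a \<Rightarrow> real) \<Rightarrow> ('a \<Rightarrow> real) \<Rightarrow> 'a \<Rightarrow> real" where
  "radial_deriv nu N f x =
     (if x = 0 then 0 else deriv (\<lambda>r. f (dil nu r (dil nu (1 / N x) x))) (N x))"

primrec Ck :: "nat \<Rightarrow> ('a::euclidean_space \<Rightarrow> real) \<Rightarrow> bool" where
  "Ck 0 f = continuous_on UNIV f"
| "Ck (Suc k) f = ((\<forall>x. f differentiable at x) \<and>
                   (\<forall>b\<in>Basis. Ck k (\<lambda>x. frechet_derivative f (at x) b)))"

definition smooth_fun :: "('a::euclidean_space \<Rightarrow> real) \<Rightarrow> bool" where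
  "smooth_fun f \<longleftrightarrow> (\<forall>k. Ck k f)"

definition C0_infty_punctured :: "('a::euclidean_space \<Rightarrow> real) \<Rightarrow> bool" where
  "C0_infty_punctured f \<longleftrightarrow> smooth_fun f \<and>
     (\<exists>K. compact K \<and> 0 \<notin> K \<and> (\<forall>x. x \<notin> K \<longrightarrow> f x = 0))"

end

theory Submission
  imports Defs
begin

text \<open>In logarithmic polar coordinates \<open>s = -ln |x|\<close> the theorem becomes one-dimensional.
Dilations scale Lebesgue measure by \<open>\<lambda>^Q\<close>, so the push-forward of \<open>dx\<close> under
\<open>x \<mapsto> -ln |x|\<close> is \<open>Q |B\<^sub>1| e^(-Q s) ds\<close>. With \<open>k = (Q - p - \<alpha> p) / p\<close> and
\<open>v(s) = e^(-k s) ft(e^(-s))\<close>, the left-hand side becomes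
\<open>Q |B\<^sub>1| (\<integral>|v' + k v|^p - k^p \<integral>|v|^p)\<close>, and \<open>d\<^sub>R(f, c\<^sub>f(R) f\<^sub>\<alpha>)^p\<close> becomes
\<open>Q |B\<^sub>1| \<integral>|v(s) - v(s\<^sub>0)|^p / |s - s\<^sub>0|^p ds\<close> with \<open>s\<^sub>0 = -ln R\<close>.
The elementary inequality \<open>|a - b|^p \<ge> |b|^p - p |b|^(p-2) b a + c\<^sub>p |a|^p\<close>, applied with
\<open>b = -k v\<close>, \<open>a = v'\<close>, together with \<open>\<integral>|v|^(p-2) v v' = 0\<close>, bounds the former below by
\<open>c\<^sub>p \<integral>|v'|^p\<close>; the one-dimensional Hardy inequality
\<open>((p-1)/p)^p \<integral>|u(t)/t|^p dt \<le> \<integral>|u'|^p dt\<close>, applied on both sides of \<open>s\<^sub>0\<close> to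
\<open>u(t) = v(s\<^sub>0 \<plusminus> t) - v(s\<^sub>0)\<close>, bounds the latter by \<open>((p-1)/p)^(-p) \<integral>|v'|^p\<close>.\<close>

section \<open>An elementary inequality for \<open>|y|^p\<close>\<close>

definition abs_pow :: "real \<Rightarrow> real \<Rightarrow> real" where
  "abs_pow p y = \<bar>y\<bar> powr p"

definition duality_map :: "real \<Rightarrow> real \<Rightarrow> real" where
  "duality_map p y = \<bar>y\<bar> powr (p - 2) * y"

lemma abs_pow_nonneg: "abs_pow p y \<ge> 0"
  by (simp add: abs_pow_def)

lemma abs_pow_minus: "abs_pow p (- y) = abs_pow p y"
  by (simp add: abs_pow_def)

lemma abs_pow_mult: "abs_pow p (a * y) = \<bar>a\<bar> powr p * abs_pow p y"
  by (simp add: abs_pow_def abs_mult powr_mult)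

lemma duality_map_minus: "duality_map p (- y) = - duality_map p y"
  by (simp add: duality_map_def)

lemma duality_map_nonneg_eq: "0 \<le> y \<Longrightarrow> duality_map p y = y powr (p - 1)"
  using powr_mult_base[of y "p - 2"] by (simp add: duality_map_def algebra_simps)

lemma duality_map_mult: "a \<ge> 0 \<Longrightarrow> duality_map p (a * y) = a powr (p - 1) * duality_map p y"
  using powr_mult_base[of a "p - 2"] by (simp add: duality_map_def abs_mult powr_mult algebra_simps)

lemma duality_map_times_self: "duality_map p y * y = abs_pow p y"
proof -
  have "duality_map p y * y = \<bar>y\<bar> powr (p - 2) * \<bar>y\<bar> * \<bar>y\<bar>"
    by (simp add: duality_map_def abs_mult_self_eq mult.assoc)
  also have "\<dots> = \<bar>y\<bar> powr p"
    using powr_mult_base[of "\<bar>y\<bar>" "p - 2"] powr_mult_base[of "\<bar>y\<bar>" "p - 1"]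
    by (simp add: algebra_simps)
  finally show ?thesis by (simp add: abs_pow_def)
qed

lemma powr_ge_tangent:
  fixes q x y :: real
  assumes q: "q \<ge> 1" and x: "x \<ge> 0" and y: "y > 0"
  shows "y powr q + q * y powr (q - 1) * (x - y) \<le> x powr q"
proof (cases "x = 0")
  case True
  have "y powr q = y powr (q - 1) * y" using y by (simp add: powr_diff)
  moreover have "y powr (q - 1) * y \<le> y powr (q - 1) * y * q"
    using q y mult_left_mono[of 1 q "y powr (q - 1) * y"] by simp
  ultimately show ?thesis using True by (simp add: algebra_simps)
next
  case False
  have "q * y powr (q - 1) * (x - y) \<le> x powr q - y powr q"
    using powr_convex[OF q] y x False
    by (intro convex_on_imp_above_tangent[where A = "{0<..}"])
       (auto intro!: derivative_eq_intros simp: interior_open)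
  then show ?thesis by simp
qed

lemma le_two_powr_minus_one: "(p::real) \<ge> 2 \<Longrightarrow> p \<le> 2 powr (p - 1)"
  using powr_ge_tangent[of "p - 1" 2 1] by simp

text \<open>By homogeneity, \<open>abs_pow_diff_ge\<close> below reduces to \<open>cp p \<le> remainder_fun p y\<close> for all
real \<open>y\<close>.\<close>

definition remainder_fun :: "real \<Rightarrow> real \<Rightarrow> real" where
  "remainder_fun p y = abs_pow p (1 - y) - abs_pow p y + p * duality_map p y"

lemma remainder_fun_eq: "0 \<le> y \<Longrightarrow> y \<le> 1 \<Longrightarrow>
    remainder_fun p y = (1 - y) powr p - y powr p + p * y powr (p - 1)"
  by (simp add: remainder_fun_def abs_pow_def duality_map_nonneg_eq)

lemma remainder_fun_nonpos_ge_one: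
  assumes p: "p \<ge> 2" and y: "y \<le> 0"
  shows "1 \<le> remainder_fun p y"
proof -
  let ?H = "\<lambda>x::real. (1 + x) powr p - x powr p - p * x powr (p - 1)"
  have "0 \<le> - y" using y by simp
  then have "?H 0 \<le> ?H (- y)"
  proof (rule DERIV_nonneg_imp_increasing_open)
    fix x :: real assume x: "0 < x" "x < - y"
    have "(1 + x) powr (p - 1) \<ge> x powr (p - 1) + (p - 1) * x powr (p - 2)"
      using powr_ge_tangent[of "p - 1" "1 + x" x] p x by (simp add: diff_diff_eq)
    then have "0 \<le> p * ((1 + x) powr (p - 1) - x powr (p - 1) - (p - 1) * x powr (p - 2))"
      using p by simp
    then have "0 \<le> p * (1 + x) powr (p - 1) - p * x powr (p - 1) - p * ((p - 1) * x powr (p - 2))"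
      by (simp add: algebra_simps)
    moreover have "(?H has_real_derivative
        p * (1 + x) powr (p - 1) - p * x powr (p - 1) - p * ((p - 1) * x powr (p - 2))) (at x)"
      using x by (rule_tac derivative_eq_intros refl | simp)+
    ultimately show "\<exists>d. (?H has_real_derivative d) (at x) \<and> 0 \<le> d"
      by blast
  next
    show "continuous_on {0..- y} ?H"
      using p by (intro continuous_intros continuous_on_powr') auto
  qed
  then show ?thesis
    using p y by (simp add: remainder_fun_def abs_pow_def duality_map_minus[of p "- y", simplified]
        duality_map_nonneg_eq)
qed

lemma remainder_fun_ge_half:
  assumes p: "p \<ge> 2" and y: "1/2 \<le> y" "y \<le> 1"
  shows "remainder_fun p (1/2) \<le> remainder_fun p y"
proof -
  let ?H = "\<lambda>x::real. (1 - x) powr p - x powr p + p * x powr (p - 1)"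
  have "?H (1/2) \<le> ?H y"
  proof (rule DERIV_nonneg_imp_increasing_open[OF y(1)])
    fix x :: real assume x: "1/2 < x" "x < y"
    have e1: "(1 - x) powr (p - 1) = (1 - x) powr (p - 2) * (1 - x)"
      using powr_mult_base[of "1 - x" "p - 2"] x y by (simp add: algebra_simps)
    have e2: "x powr (p - 1) = x powr (p - 2) * x"
      using powr_mult_base[of x "p - 2"] x by (simp add: algebra_simps)
    have "(1 - x) powr (p - 2) \<le> x powr (p - 2)"
      using x y p by (intro powr_mono2) auto
    then have "(1 - x) powr (p - 1) + x powr (p - 1) \<le> x powr (p - 2) * (1 - x) + x powr (p - 2) * x"
      unfolding e1 e2 using x y by (intro add_mono mult_right_mono) auto
    also have "\<dots> \<le> (p - 1) * x powr (p - 2)"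
      using p mult_right_mono[of 1 "p - 1" "x powr (p - 2)"] by (simp add: algebra_simps)
    finally have "0 \<le> p * ((p - 1) * x powr (p - 2) - (1 - x) powr (p - 1) - x powr (p - 1))"
      using p by simp
    then have "0 \<le> - (p * (1 - x) powr (p - 1)) - p * x powr (p - 1) + p * ((p - 1) * x powr (p - 2))"
      by (simp add: algebra_simps)
    moreover have "(?H has_real_derivative
        - (p * (1 - x) powr (p - 1)) - p * x powr (p - 1) + p * ((p - 1) * x powr (p - 2))) (at x)"
      using x y by (rule_tac derivative_eq_intros refl | simp)+
    ultimately show "\<exists>d. (?H has_real_derivative d) (at x) \<and> 0 \<le> d"
      by blast
  next
    show "continuous_on {1/2..y} ?H"
      using p y by (intro continuous_intros continuous_on_powr') auto
  qed
  then show ?thesis using y by (simp add: remainder_fun_eq)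
qed

lemma remainder_fun_ge_one:
  assumes p: "p \<ge> 2" and y: "1 \<le> y"
  shows "p - 1 \<le> remainder_fun p y"
proof -
  let ?H = "\<lambda>x::real. (x - 1) powr p - x powr p + p * x powr (p - 1)"
  have "?H 1 \<le> ?H y"
  proof (rule DERIV_nonneg_imp_increasing_open[OF y])
    fix x :: real assume x: "1 < x" "x < y"
    have "(x - 1) powr (p - 1) \<ge> x powr (p - 1) - (p - 1) * x powr (p - 2)"
      using powr_ge_tangent[of "p - 1" "x - 1" x] p x by (simp add: diff_diff_eq)
    then have "0 \<le> p * ((x - 1) powr (p - 1) - x powr (p - 1) + (p - 1) * x powr (p - 2))"
      using p by simp
    then have "0 \<le> p * (x - 1) powr (p - 1) - p * x powr (p - 1) + p * ((p - 1) * x powr (p - 2))"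
      by (simp add: algebra_simps)
    moreover have "(?H has_real_derivative
        p * (x - 1) powr (p - 1) - p * x powr (p - 1) + p * ((p - 1) * x powr (p - 2))) (at x)"
      using x by (rule_tac derivative_eq_intros refl | simp)+
    ultimately show "\<exists>d. (?H has_real_derivative d) (at x) \<and> 0 \<le> d"
      by blast
  next
    show "continuous_on {1..y} ?H"
      using p y by (intro continuous_intros continuous_on_powr') auto
  qed
  then show ?thesis
    using p y by (simp add: remainder_fun_def abs_pow_def duality_map_nonneg_eq)
qed

definition cp :: "real \<Rightarrow> real" where
  "cp p = Inf ((\<lambda>t. (1 - t) powr p - t powr p + p * t powr (p - 1)) ` {0<..1/2})"

lemma cp_nonneg:
  assumes p: "p \<ge> 2"
  shows "0 \<le> cp p"
  unfolding cp_def
proof (rule cInf_greatest)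
  fix z assume "z \<in> (\<lambda>t. (1 - t) powr p - t powr p + p * t powr (p - 1)) ` {0<..1/2}"
  then obtain t where t: "0 < t" "t \<le> 1/2" and z: "z = (1 - t) powr p - t powr p + p * t powr (p - 1)"
    by auto
  have "t powr p \<le> (1 - t) powr p" using t p by (intro powr_mono2) auto
  then show "0 \<le> z" using p t unfolding z by simp
qed simp

lemma cp_le_remainder_fun_on_half:
  assumes p: "p \<ge> 2" and t: "0 < t" "t \<le> 1/2"
  shows "cp p \<le> remainder_fun p t"
proof -
  have "0 \<le> (1 - t) powr p - t powr p + p * t powr (p - 1)" if "0 < t" "t \<le> 1/2" for t
  proof -
    have "t powr p \<le> (1 - t) powr p" using that p by (intro powr_mono2) auto
    then show ?thesis using p by simp
  qed
  then have "bdd_below ((\<lambda>t. (1 - t) powr p - t powr p + p * t powr (p - 1)) ` {0<..1/2})"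
    by (intro bdd_belowI[of _ 0]) auto
  then show ?thesis
    unfolding cp_def using t by (auto intro!: cInf_lower simp: remainder_fun_eq)
qed

lemma cp_le_one:
  assumes p: "p \<ge> 2"
  shows "cp p \<le> 1"
proof -
  have "cp p \<le> p / 2 powr (p - 1)"
    using cp_le_remainder_fun_on_half[OF p, of "1/2"] by (simp add: remainder_fun_eq powr_divide)
  also have "\<dots> \<le> 1" using le_two_powr_minus_one[OF p] by simp
  finally show ?thesis .
qed

lemma cp_le_remainder_fun:
  assumes p: "p \<ge> 2"
  shows "cp p \<le> remainder_fun p y"
proof -
  consider "y \<le> 0" | "0 < y" "y \<le> 1/2" | "1/2 \<le> y" "y \<le> 1" | "1 \<le> y" by linarith
  then show ?thesis
  proof cases
    case 1
    then show ?thesis using remainder_fun_nonpos_ge_one[OF p 1] cp_le_one[OF p] by linarith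
  next
    case 2
    then show ?thesis by (rule cp_le_remainder_fun_on_half[OF p])
  next
    case 3
    then show ?thesis
      using remainder_fun_ge_half[OF p 3] cp_le_remainder_fun_on_half[OF p, of "1/2"] by simp
  next
    case 4
    then show ?thesis using remainder_fun_ge_one[OF p 4] cp_le_one[OF p] p by linarith
  qed
qed

lemma abs_pow_diff_ge:
  assumes p: "p \<ge> 2"
  shows "abs_pow p b - p * duality_map p b * a + cp p * abs_pow p a \<le> abs_pow p (a - b)"
proof (cases "a = 0")
  case True
  then show ?thesis by (simp add: abs_pow_minus[of p b, unfolded abs_pow_def] abs_pow_def)
next
  case False
  define y where "y = b / a"
  have b: "b = a * y" using False by (simp add: y_def)
  have "duality_map p b * a = \<bar>a\<bar> powr (p - 1) * \<bar>a\<bar> * duality_map p y"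
    using duality_map_mult[of a p y] duality_map_mult[of "- a" p "- y"]
    by (cases "a \<ge> 0") (auto simp: b duality_map_minus)
  also have "\<bar>a\<bar> powr (p - 1) * \<bar>a\<bar> = \<bar>a\<bar> powr p"
    using powr_mult_base[of "\<bar>a\<bar>" "p - 1"] by (simp add: algebra_simps)
  finally have "abs_pow p b - p * duality_map p b * a + cp p * abs_pow p a
      = \<bar>a\<bar> powr p * (abs_pow p y - p * duality_map p y + cp p)"
    unfolding b abs_pow_mult by (simp add: abs_pow_def algebra_simps)
  also have "\<dots> \<le> \<bar>a\<bar> powr p * abs_pow p (1 - y)"
    using cp_le_remainder_fun[OF p, of y] by (intro mult_left_mono) (auto simp: remainder_fun_def)
  also have "\<dots> = abs_pow p (a - b)"
    unfolding b abs_pow_mult[symmetric] by (simp add: algebra_simps)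
  finally show ?thesis .
qed

lemma abs_pow_ge_tangent:
  assumes p: "p \<ge> 2"
  shows "abs_pow p b + p * duality_map p b * (x - b) \<le> abs_pow p x"
proof -
  have "0 \<le> cp p * abs_pow p (b - x)"
    using cp_nonneg[OF p] abs_pow_nonneg[of p "b - x"] by simp
  then show ?thesis
    using abs_pow_diff_ge[OF p, where a="b - x" and b=b] abs_pow_minus[of p x] by (simp add: algebra_simps)
qed

lemma has_real_derivative_abs_pow:
  assumes p: "p \<ge> 2"
  shows "(abs_pow p has_real_derivative p * duality_map p y) (at y)"
proof -
  consider "y > 0" | "y < 0" | "y = 0" by linarith
  then show ?thesis
  proof cases
    case 1
    have "((\<lambda>z. z powr p) has_real_derivative p * duality_map p y) (at y)"
      using has_real_derivative_powr[OF 1] 1 by (simp add: duality_map_nonneg_eq)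
    then show ?thesis
      by (rule has_field_derivative_transform_within_open[where S="{0<..}"])
         (use 1 in \<open>auto simp: abs_pow_def\<close>)
  next
    case 2
    have "((\<lambda>z. (- z) powr p) has_real_derivative p * (- y) powr (p - 1) * (- 1)) (at y)"
      using 2 by (intro DERIV_fun_powr derivative_eq_intros) auto
    moreover have "duality_map p y = - ((- y) powr (p - 1))"
      using 2 duality_map_nonneg_eq[of "- y" p] duality_map_minus[of p "- y"] by simp
    ultimately show ?thesis
      by (rule_tac has_field_derivative_transform_within_open[where S="{..<0}"])
         (use 2 in \<open>auto simp: abs_pow_def\<close>)
  next
    case 3
    have "((\<lambda>h::real. \<bar>h\<bar> powr (p - 1)) \<longlongrightarrow> 0) (at 0)"
      using p by (intro tendsto_zero_powrI tendsto_intros)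
        (auto simp: tendsto_rabs_zero_iff intro: tendsto_ident_at)
    moreover have "\<forall>\<^sub>F h in at 0. \<bar>h\<bar> powr (p - 1) = norm ((abs_pow p (0 + h) - abs_pow p 0) / h)"
      by (rule eventually_at_filter[THEN iffD2], rule always_eventually) (simp add: abs_pow_def powr_diff)
    ultimately have "((\<lambda>h. norm ((abs_pow p (0 + h) - abs_pow p 0) / h)) \<longlongrightarrow> 0) (at 0)"
      by (rule Lim_transform_eventually)
    then have "((\<lambda>h. (abs_pow p (0 + h) - abs_pow p 0) / h) \<longlongrightarrow> 0) (at 0)"
      by (rule tendsto_norm_zero_cancel)
    then show ?thesis using 3 by (simp add: DERIV_def duality_map_def)
  qed
qed

lemma isCont_duality_map:
  assumes p: "p \<ge> 2"
  shows "isCont (duality_map p) y"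
proof (cases "y = 0")
  case False
  then show ?thesis unfolding duality_map_def by (intro continuous_intros) auto
next
  case True
  have "((\<lambda>h::real. \<bar>h\<bar> powr (p - 1)) \<longlongrightarrow> 0) (at 0)"
    using p by (intro tendsto_zero_powrI tendsto_intros)
      (auto simp: tendsto_rabs_zero_iff intro: tendsto_ident_at)
  moreover have "\<bar>h\<bar> powr (p - 1) = norm (duality_map p h)" for h
    using powr_mult_base[of "\<bar>h\<bar>" "p - 2"] by (simp add: duality_map_def abs_mult algebra_simps)
  ultimately have "((\<lambda>h. norm (duality_map p h)) \<longlongrightarrow> 0) (at 0)"
    by simp
  then have "(duality_map p \<longlongrightarrow> 0) (at 0)"
    by (rule tendsto_norm_zero_cancel)
  then show ?thesis using True by (simp add: isCont_def duality_map_def)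
qed

lemma continuous_on_duality_map: "p \<ge> 2 \<Longrightarrow> continuous_on S (duality_map p)"
  by (simp add: continuous_at_imp_continuous_on isCont_duality_map)

lemma continuous_on_abs_pow: "p > 0 \<Longrightarrow> continuous_on S (abs_pow p)"
  unfolding abs_pow_def by (intro continuous_on_powr' continuous_intros) auto

lemma continuous_on_abs_pow_compose:
  "p > 0 \<Longrightarrow> continuous_on S u \<Longrightarrow> continuous_on S (\<lambda>t. abs_pow p (u t))"
  by (rule continuous_on_compose2[OF continuous_on_abs_pow[of p UNIV]]) auto

lemma continuous_on_duality_map_compose:
  "p \<ge> 2 \<Longrightarrow> continuous_on S u \<Longrightarrow> continuous_on S (\<lambda>t. duality_map p (u t))"
  by (rule continuous_on_compose2[OF continuous_on_duality_map[of p UNIV]]) auto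

lemma borel_measurable_abs_pow[measurable]: "p > 0 \<Longrightarrow> abs_pow p \<in> borel_measurable borel"
  by (rule borel_measurable_continuous_onI[OF continuous_on_abs_pow])

section \<open>Hardy's inequality on a half-line\<close>

lemma abs_pow_ge_hardy_tangent:
  assumes p: "p \<ge> 2"
  shows "((p - 1) / p) powr p * abs_pow p y
      + ((p - 1) / p) powr (p - 1) * (p * duality_map p y * w + (1 - p) * abs_pow p y)
      \<le> abs_pow p w"
proof -
  define \<beta> where "\<beta> = (p - 1) / p"
  have \<beta>: "\<beta> > 0" "p * \<beta> = p - 1" using p by (auto simp: \<beta>_def)
  have \<beta>p: "\<beta> powr p = \<beta> powr (p - 1) * \<beta>"
    using powr_mult_base[of \<beta> "p - 1"] \<beta> by (simp add: algebra_simps)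
  have "abs_pow p (\<beta> * y) + p * duality_map p (\<beta> * y) * (w - \<beta> * y) \<le> abs_pow p w"
    by (rule abs_pow_ge_tangent[OF p])
  moreover have "abs_pow p (\<beta> * y) + p * duality_map p (\<beta> * y) * (w - \<beta> * y)
      = \<beta> powr p * abs_pow p y + \<beta> powr (p - 1) * (p * duality_map p y * w + (1 - p) * abs_pow p y)"
  proof -
    have "p * duality_map p (\<beta> * y) * (\<beta> * y) = (p * \<beta>) * \<beta> powr (p - 1) * (duality_map p y * y)"
      using \<beta>(1) by (simp add: duality_map_mult ac_simps)
    also have "\<dots> = (p - 1) * \<beta> powr (p - 1) * abs_pow p y"
      by (simp only: \<beta>(2) duality_map_times_self)
    finally have "p * duality_map p (\<beta> * y) * (\<beta> * y) = (p - 1) * \<beta> powr (p - 1) * abs_pow p y" .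
    then show ?thesis
      using \<beta> by (simp add: abs_pow_mult duality_map_mult \<beta>p algebra_simps)
  qed
  ultimately show ?thesis by (simp add: \<beta>_def)
qed

lemma has_real_derivative_abs_pow_times_powr:
  assumes p: "p \<ge> 2" and u: "(u has_real_derivative d) (at t)" and t: "t > 0"
  shows "((\<lambda>t. abs_pow p (u t) * t powr (1 - p)) has_real_derivative
           p * duality_map p (u t / t) * d + (1 - p) * abs_pow p (u t / t)) (at t)"
proof -
  define y where "y = u t / t"
  have uy: "u t = t * y" using t by (simp add: y_def)
  have "((\<lambda>t. abs_pow p (u t) * t powr (1 - p)) has_real_derivative
      p * duality_map p (u t) * d * t powr (1 - p) + (1 - p) * t powr (1 - p - 1) * abs_pow p (u t)) (at t)"
    by (rule DERIV_mult[OF DERIV_chain2[OF has_real_derivative_abs_pow[OF p] u]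
          has_real_derivative_powr[OF t]])
  moreover have "t powr (p - 1) * t powr (1 - p) = 1" "t powr p * t powr (1 - p - 1) = 1"
    using t by (simp_all add: powr_add[symmetric])
  then have "p * duality_map p (u t) * d * t powr (1 - p) + (1 - p) * t powr (1 - p - 1) * abs_pow p (u t)
      = p * duality_map p y * d + (1 - p) * abs_pow p y"
    using t unfolding uy by (simp add: abs_pow_mult duality_map_mult algebra_simps)
  ultimately show ?thesis by (simp add: y_def)
qed

lemma integrable_indicator_atLeastAtMost:
  fixes g :: "real \<Rightarrow> real"
  assumes "continuous_on {a..b} g"
  shows "integrable lborel (\<lambda>t. indicator {a..b} t * g t)"
  using borel_integrable_atLeastAtMost'[OF assms] by (simp add: set_integrable_def)

lemma integral_deriv_abs_pow_times_powr:
  fixes u u' :: "real \<Rightarrow> real"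
  assumes p: "p \<ge> 2"
    and u: "\<And>t. (u has_real_derivative u' t) (at t)" "continuous_on UNIV u'"
    and \<epsilon>: "0 < \<epsilon>" "\<epsilon> \<le> T"
  defines "G \<equiv> \<lambda>t. p * duality_map p (u t / t) * u' t + (1 - p) * abs_pow p (u t / t)"
  shows "integrable lborel (\<lambda>t. indicator {\<epsilon>..T} t * G t)"
    and "(\<integral>t. indicator {\<epsilon>..T} t * G t \<partial>lborel)
      = abs_pow p (u T) * T powr (1 - p) - abs_pow p (u \<epsilon>) * \<epsilon> powr (1 - p)"
proof -
  have cu: "continuous_on UNIV u"
    using u(1) by (intro continuous_at_imp_continuous_on) (auto intro: DERIV_isCont)
  have cG: "continuous_on {\<epsilon>..T} G"
    unfolding G_def using \<epsilon> p
    by (intro continuous_intros continuous_on_duality_map_compose continuous_on_abs_pow_compose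
        continuous_on_subset[OF u(2)] continuous_on_subset[OF cu]) auto
  then show "integrable lborel (\<lambda>t. indicator {\<epsilon>..T} t * G t)"
    by (rule integrable_indicator_atLeastAtMost)
  have "(\<integral>t. indicator {\<epsilon>..T} t *\<^sub>R G t \<partial>lborel)
      = abs_pow p (u T) * T powr (1 - p) - abs_pow p (u \<epsilon>) * \<epsilon> powr (1 - p)"
  proof (rule integral_FTC_atLeastAtMost[OF \<epsilon>(2) _ cG])
    fix t assume "\<epsilon> \<le> t" "t \<le> T"
    with \<epsilon> have "((\<lambda>t. abs_pow p (u t) * t powr (1 - p)) has_real_derivative G t) (at t)"
      unfolding G_def by (intro has_real_derivative_abs_pow_times_powr[OF p u(1)]) auto
    then show "((\<lambda>t. abs_pow p (u t) * t powr (1 - p)) has_vector_derivative G t) (at t within {\<epsilon>..T})"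
      by (simp add: has_real_derivative_iff_has_vector_derivative has_vector_derivative_at_within)
  qed
  then show "(\<integral>t. indicator {\<epsilon>..T} t * G t \<partial>lborel)
      = abs_pow p (u T) * T powr (1 - p) - abs_pow p (u \<epsilon>) * \<epsilon> powr (1 - p)"
    by simp
qed

lemma abs_pow_times_powr_le:
  fixes u u' :: "real \<Rightarrow> real"
  assumes p: "p > 0"
    and u: "\<And>t. (u has_real_derivative u' t) (at t)" "u 0 = 0"
    and M: "\<And>t. \<bar>u' t\<bar> \<le> M"
    and \<epsilon>: "0 < \<epsilon>"
  shows "abs_pow p (u \<epsilon>) * \<epsilon> powr (1 - p) \<le> M powr p * \<epsilon>"
proof -
  obtain z where "u \<epsilon> - u 0 = (\<epsilon> - 0) * u' z" using MVT2[OF \<epsilon>, of u u'] u(1) by blast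
  then have "\<bar>u \<epsilon>\<bar> \<le> M * \<epsilon>"
    using u(2) \<epsilon> M[of z] mult_left_mono[of "\<bar>u' z\<bar>" M \<epsilon>] by (simp add: abs_mult mult.commute)
  then have "abs_pow p (u \<epsilon>) * \<epsilon> powr (1 - p) \<le> (M * \<epsilon>) powr p * \<epsilon> powr (1 - p)"
    unfolding abs_pow_def using p by (intro mult_right_mono powr_mono2) auto
  also have "\<dots> = M powr p * \<epsilon>"
    using \<epsilon> M[of 0] by (simp add: powr_mult mult.assoc powr_add[symmetric])
  finally show ?thesis .
qed

text \<open>Taking \<open>y = u t / t\<close> and \<open>w = u' t\<close> in \<open>abs_pow_ge_hardy_tangent\<close>, the last term is the
derivative of \<open>|u t|^p t^(1-p)\<close>. Its boundary value at \<open>T\<close> is nonnegative, and at \<open>\<epsilon>\<close> it is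
at most \<open>M^p \<epsilon>\<close> because \<open>u 0 = 0\<close>.\<close>

lemma hardy_truncated:
  fixes u u' :: "real \<Rightarrow> real"
  assumes p: "p \<ge> 2"
    and u: "\<And>t. (u has_real_derivative u' t) (at t)" "continuous_on UNIV u'" "u 0 = 0"
    and M: "\<And>t. \<bar>u' t\<bar> \<le> M"
    and \<epsilon>: "0 < \<epsilon>" "\<epsilon> \<le> T"
  shows "((p - 1) / p) powr p * (\<integral>t. indicator {\<epsilon>..T} t * abs_pow p (u t / t) \<partial>lborel)
     \<le> (\<integral>t. indicator {\<epsilon>..T} t * abs_pow p (u' t) \<partial>lborel) + ((p - 1) / p) powr (p - 1) * (M powr p * \<epsilon>)"
proof -
  define \<beta> where "\<beta> = (p - 1) / p"
  define F where "F t = abs_pow p (u t) * t powr (1 - p)" for t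
  define G where "G t = p * duality_map p (u t / t) * u' t + (1 - p) * abs_pow p (u t / t)" for t
  have int_G: "integrable lborel (\<lambda>t. indicator {\<epsilon>..T} t * G t)"
    "(\<integral>t. indicator {\<epsilon>..T} t * G t \<partial>lborel) = F T - F \<epsilon>"
    using integral_deriv_abs_pow_times_powr[OF p u(1,2) \<epsilon>] by (simp_all add: F_def G_def[abs_def])
  have cu: "continuous_on UNIV u"
    using u(1) by (intro continuous_at_imp_continuous_on) (auto intro: DERIV_isCont)
  have int_u: "integrable lborel (\<lambda>t. indicator {\<epsilon>..T} t * abs_pow p (u t / t))"
    using p \<epsilon> by (intro integrable_indicator_atLeastAtMost continuous_on_abs_pow_compose continuous_intros
        continuous_on_subset[OF cu]) auto
  have int_u': "integrable lborel (\<lambda>t. indicator {\<epsilon>..T} t * abs_pow p (u' t))"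
    using p by (intro integrable_indicator_atLeastAtMost continuous_on_abs_pow_compose
        continuous_on_subset[OF u(2)]) auto
  have "\<beta> powr p * (\<integral>t. indicator {\<epsilon>..T} t * abs_pow p (u t / t) \<partial>lborel) + \<beta> powr (p - 1) * (F T - F \<epsilon>)
      = (\<integral>t. \<beta> powr p * (indicator {\<epsilon>..T} t * abs_pow p (u t / t))
              + \<beta> powr (p - 1) * (indicator {\<epsilon>..T} t * G t) \<partial>lborel)"
    using int_u int_G by simp
  also have "\<dots> \<le> (\<integral>t. indicator {\<epsilon>..T} t * abs_pow p (u' t) \<partial>lborel)"
    using int_u int_u' int_G(1) abs_pow_ge_hardy_tangent[OF p, of "u t / t" "u' t" for t]
    by (intro integral_mono) (auto simp: indicator_def G_def \<beta>_def)
  finally have main: "\<beta> powr p * (\<integral>t. indicator {\<epsilon>..T} t * abs_pow p (u t / t) \<partial>lborel)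
      \<le> (\<integral>t. indicator {\<epsilon>..T} t * abs_pow p (u' t) \<partial>lborel) + \<beta> powr (p - 1) * (F \<epsilon> - F T)"
    by (simp add: algebra_simps)
  have "F \<epsilon> \<le> M powr p * \<epsilon>"
    unfolding F_def using p by (intro abs_pow_times_powr_le[OF _ u(1,3) M \<epsilon>(1)]) simp
  moreover have "0 \<le> F T"
    by (simp add: F_def abs_pow_nonneg)
  ultimately have "F \<epsilon> - F T \<le> M powr p * \<epsilon>"
    by linarith
  then have "\<beta> powr (p - 1) * (F \<epsilon> - F T) \<le> \<beta> powr (p - 1) * (M powr p * \<epsilon>)"
    by (intro mult_left_mono) auto
  with main show ?thesis by (simp add: \<beta>_def)
qed

lemma hardy_truncated_nn:
  fixes u u' :: "real \<Rightarrow> real"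
  assumes p: "p \<ge> 2"
    and u: "\<And>t. (u has_real_derivative u' t) (at t)" "continuous_on UNIV u'" "u 0 = 0"
    and M: "\<And>t. \<bar>u' t\<bar> \<le> M"
    and \<epsilon>: "0 < \<epsilon>" "\<epsilon> \<le> T"
  shows "ennreal (((p - 1) / p) powr p) * (\<integral>\<^sup>+ t. ennreal (indicator {\<epsilon>..T} t * abs_pow p (u t / t)) \<partial>lborel)
     \<le> (\<integral>\<^sup>+ t. ennreal (indicator {0<..} t * abs_pow p (u' t)) \<partial>lborel)
        + ennreal (((p - 1) / p) powr (p - 1) * (M powr p * \<epsilon>))"
proof -
  have cu: "continuous_on UNIV u"
    using u(1) by (intro continuous_at_imp_continuous_on) (auto intro: DERIV_isCont)
  have int_u: "integrable lborel (\<lambda>t. indicator {\<epsilon>..T} t * abs_pow p (u t / t))"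
    using p \<epsilon> by (intro integrable_indicator_atLeastAtMost continuous_on_abs_pow_compose continuous_intros
        continuous_on_subset[OF cu]) auto
  have int_u': "integrable lborel (\<lambda>t. indicator {\<epsilon>..T} t * abs_pow p (u' t))"
    using p by (intro integrable_indicator_atLeastAtMost continuous_on_abs_pow_compose
        continuous_on_subset[OF u(2)]) auto
  have M0: "0 \<le> M" using M[of 0] by linarith
  have "(\<integral>\<^sup>+ t. ennreal (indicator {\<epsilon>..T} t * abs_pow p (u t / t)) \<partial>lborel)
      = ennreal (\<integral>t. indicator {\<epsilon>..T} t * abs_pow p (u t / t) \<partial>lborel)"
    by (rule nn_integral_eq_integral[OF int_u]) (simp add: abs_pow_nonneg)
  then have "ennreal (((p - 1) / p) powr p) * (\<integral>\<^sup>+ t. ennreal (indicator {\<epsilon>..T} t * abs_pow p (u t / t)) \<partial>lborel)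
      = ennreal (((p - 1) / p) powr p * (\<integral>t. indicator {\<epsilon>..T} t * abs_pow p (u t / t) \<partial>lborel))"
    by (simp add: abs_pow_nonneg ennreal_mult integral_nonneg)
  also have "\<dots> \<le> ennreal ((\<integral>t. indicator {\<epsilon>..T} t * abs_pow p (u' t) \<partial>lborel)
        + ((p - 1) / p) powr (p - 1) * (M powr p * \<epsilon>))"
    by (rule ennreal_leI, rule hardy_truncated[OF p u M \<epsilon>])
  also have "\<dots> = (\<integral>\<^sup>+ t. ennreal (indicator {\<epsilon>..T} t * abs_pow p (u' t)) \<partial>lborel)
        + ennreal (((p - 1) / p) powr (p - 1) * (M powr p * \<epsilon>))"
  proof -
    have "(\<integral>\<^sup>+ t. ennreal (indicator {\<epsilon>..T} t * abs_pow p (u' t)) \<partial>lborel)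
        = ennreal (\<integral>t. indicator {\<epsilon>..T} t * abs_pow p (u' t) \<partial>lborel)"
      by (rule nn_integral_eq_integral[OF int_u']) (simp add: abs_pow_nonneg)
    then show ?thesis
      using \<epsilon> M0 by (simp add: abs_pow_nonneg integral_nonneg ennreal_plus)
  qed
  also have "\<dots> \<le> (\<integral>\<^sup>+ t. ennreal (indicator {0<..} t * abs_pow p (u' t)) \<partial>lborel)
        + ennreal (((p - 1) / p) powr (p - 1) * (M powr p * \<epsilon>))"
    using \<epsilon> by (intro add_right_mono nn_integral_mono) (auto simp: indicator_def abs_pow_nonneg)
  finally show ?thesis .
qed

lemma nn_integral_greaterThan_eq_SUP:
  fixes g :: "real \<Rightarrow> real"
  assumes [measurable]: "g \<in> borel_measurable borel" and g: "\<And>t. g t \<ge> 0"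
  shows "(\<integral>\<^sup>+ t. ennreal (indicator {0<..} t * g t) \<partial>lborel)
    = (SUP n. \<integral>\<^sup>+ t. ennreal (indicator {1 / (real n + 1)..real n + 1} t * g t) \<partial>lborel)"
proof -
  have incseq: "incseq (\<lambda>n t. ennreal (indicator {1 / (real n + 1)..real n + 1} t * g t))"
  proof (intro monoI le_funI)
    fix n m :: nat and t assume "n \<le> m"
    then have "1 / (real m + 1) \<le> 1 / (real n + 1)" by (simp add: field_simps)
    with \<open>n \<le> m\<close> show "ennreal (indicator {1 / (real n + 1)..real n + 1} t * g t)
        \<le> ennreal (indicator {1 / (real m + 1)..real m + 1} t * g t)"
      using g[of t] by (auto simp: indicator_def)
  qed
  have "(SUP n. ennreal (indicator {1 / (real n + 1)..real n + 1} t * g t)) = ennreal (indicator {0<..} t * g t)" for t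
  proof (rule antisym)
    show "(SUP n. ennreal (indicator {1 / (real n + 1)..real n + 1} t * g t)) \<le> ennreal (indicator {0<..} t * g t)"
      using g[of t] by (intro SUP_least) (auto simp: indicator_def intro: order.strict_trans2[rotated])
    show "ennreal (indicator {0<..} t * g t) \<le> (SUP n. ennreal (indicator {1 / (real n + 1)..real n + 1} t * g t))"
    proof (cases "t > 0")
      case True
      obtain n :: nat where "real n > max t (1 / t)" using reals_Archimedean2 by blast
      then have "1 / (real n + 1) \<le> t" "t \<le> real n + 1" using True by (simp_all add: field_simps)
      then show ?thesis using True by (intro SUP_upper2[of n]) (auto simp: indicator_def)
    qed simp
  qed
  then have "(\<integral>\<^sup>+ t. ennreal (indicator {0<..} t * g t) \<partial>lborel)
      = (\<integral>\<^sup>+ t. (SUP n. ennreal (indicator {1 / (real n + 1)..real n + 1} t * g t)) \<partial>lborel)"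
    by simp
  also have "\<dots> = (SUP n. \<integral>\<^sup>+ t. ennreal (indicator {1 / (real n + 1)..real n + 1} t * g t) \<partial>lborel)"
    using incseq by (intro nn_integral_monotone_convergence_SUP) auto
  finally show ?thesis .
qed

lemma hardy_half_line:
  fixes u u' :: "real \<Rightarrow> real"
  assumes p: "p \<ge> 2"
    and u: "\<And>t. (u has_real_derivative u' t) (at t)" "continuous_on UNIV u'" "u 0 = 0"
    and M: "\<And>t. \<bar>u' t\<bar> \<le> M"
  shows "ennreal (((p - 1) / p) powr p) * (\<integral>\<^sup>+ t. ennreal (indicator {0<..} t * abs_pow p (u t / t)) \<partial>lborel)
     \<le> (\<integral>\<^sup>+ t. ennreal (indicator {0<..} t * abs_pow p (u' t)) \<partial>lborel)"
proof -
  define C where "C = ((p - 1) / p) powr (p - 1) * M powr p"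
  define I where "I \<epsilon> T = (\<integral>\<^sup>+ t. ennreal (indicator {\<epsilon>..T} t * abs_pow p (u t / t)) \<partial>lborel)" for \<epsilon> T
  have [measurable]: "u \<in> borel_measurable borel"
    using u(1) by (intro borel_measurable_continuous_onI continuous_at_imp_continuous_on) (auto intro: DERIV_isCont)
  have "ennreal (((p - 1) / p) powr p) * I (1 / (real n + 1)) (real n + 1)
      \<le> (\<integral>\<^sup>+ t. ennreal (indicator {0<..} t * abs_pow p (u' t)) \<partial>lborel)" for n :: nat
  proof (rule ennreal_le_epsilon)
    fix d :: real assume d: "0 < d"
    obtain m :: nat where "real m > C / d" using reals_Archimedean2 by blast
    then have "C / d < real (max m n) + 1" by linarith
    then have Cd: "C * (1 / (real (max m n) + 1)) \<le> d" using d by (simp add: field_simps)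
    have "{1 / (real n + 1)..real n + 1} \<subseteq> {1 / (real (max m n) + 1)..real (max m n) + 1}"
      by (auto intro: order_trans[rotated] simp: frac_le)
    then have "I (1 / (real n + 1)) (real n + 1) \<le> I (1 / (real (max m n) + 1)) (real (max m n) + 1)"
      unfolding I_def by (intro nn_integral_mono) (auto simp: indicator_def abs_pow_nonneg)
    then have "ennreal (((p - 1) / p) powr p) * I (1 / (real n + 1)) (real n + 1)
        \<le> ennreal (((p - 1) / p) powr p) * I (1 / (real (max m n) + 1)) (real (max m n) + 1)"
      by (rule mult_left_mono) simp
    also have "\<dots> \<le> (\<integral>\<^sup>+ t. ennreal (indicator {0<..} t * abs_pow p (u' t)) \<partial>lborel)
        + ennreal (C * (1 / (real (max m n) + 1)))"
      unfolding I_def C_def mult.assoc by (rule hardy_truncated_nn[OF p u M]) (simp_all add: field_simps)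
    also have "\<dots> \<le> (\<integral>\<^sup>+ t. ennreal (indicator {0<..} t * abs_pow p (u' t)) \<partial>lborel) + ennreal d"
      using Cd by (intro add_left_mono ennreal_leI)
    finally show "ennreal (((p - 1) / p) powr p) * I (1 / (real n + 1)) (real n + 1)
        \<le> (\<integral>\<^sup>+ t. ennreal (indicator {0<..} t * abs_pow p (u' t)) \<partial>lborel) + ennreal d" .
  qed
  moreover have "(\<integral>\<^sup>+ t. ennreal (indicator {0<..} t * abs_pow p (u t / t)) \<partial>lborel)
      = (SUP n. I (1 / (real n + 1)) (real n + 1))"
    unfolding I_def using p by (intro nn_integral_greaterThan_eq_SUP) (measurable, simp add: abs_pow_nonneg)
  ultimately show ?thesis
    by (simp add: SUP_mult_left_ennreal SUP_least)
qed

section \<open>Compactly supported \<open>C\<^sup>1\<close> functions on the line\<close>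

lemma has_real_derivative_affine_comp_diff:
  assumes "\<And>s. (v has_real_derivative v' s) (at s)"
  shows "((\<lambda>t. v (s0 + c * t) - v s0) has_real_derivative c * v' (s0 + c * t)) (at t)"
proof -
  have "((\<lambda>t. s0 + c * t) has_real_derivative c) (at t)"
    by (auto intro!: derivative_eq_intros)
  from DERIV_chain2[OF assms this] show ?thesis
    by (auto intro!: derivative_eq_intros simp: mult.commute)
qed

definition diff_quotient_pow :: "(real \<Rightarrow> real) \<Rightarrow> real \<Rightarrow> real \<Rightarrow> real \<Rightarrow> real" where
  "diff_quotient_pow v p s0 s = abs_pow p (v s - v s0) / \<bar>s - s0\<bar> powr p"

locale C1_compact_support =
  fixes v v' :: "real \<Rightarrow> real" and a b :: real
  assumes a_le_b: "a \<le> b"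
    and has_deriv: "\<And>s. (v has_real_derivative v' s) (at s)"
    and continuous_deriv: "continuous_on UNIV v'"
    and vanishes: "\<And>s. s \<le> a \<or> b \<le> s \<Longrightarrow> v s = 0"
begin

lemma continuous: "continuous_on UNIV v"
  using has_deriv by (intro continuous_at_imp_continuous_on) (auto intro: DERIV_isCont)

lemma borel_measurable[measurable]: "v \<in> borel_measurable borel" "v' \<in> borel_measurable borel"
  by (auto intro: borel_measurable_continuous_onI continuous continuous_deriv)

lemma deriv_vanishes:
  assumes "s < a \<or> b < s"
  shows "v' s = 0"
proof -
  let ?S = "if s < a then {..<a} else {b<..}"
  have "(v has_real_derivative 0) (at s)"
    by (rule has_field_derivative_transform_within_open[of "\<lambda>_. 0" 0 s ?S])
       (use assms vanishes in \<open>auto split: if_splits\<close>)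
  then show ?thesis using has_deriv[of s] DERIV_unique by blast
qed

lemma integrable_vanishing_with:
  fixes h :: "real \<Rightarrow> real"
  assumes h: "continuous_on UNIV h" and h0: "\<And>s. v s = 0 \<Longrightarrow> v' s = 0 \<Longrightarrow> h s = 0"
  shows "integrable lborel h"
proof -
  have "integrable lborel (\<lambda>t. indicator {a..b} t * h t)"
    by (rule integrable_indicator_atLeastAtMost[OF continuous_on_subset[OF h]]) simp
  moreover have "indicator {a..b} t * h t = h t" for t
    using h0[OF vanishes deriv_vanishes, of t] by (cases "t \<in> {a..b}") auto
  ultimately show ?thesis by simp
qed

lemma integral_duality_map_deriv:
  assumes p: "p \<ge> 2"
  shows "(\<integral>s. duality_map p (v s) * v' s \<partial>lborel) = 0"
proof -
  have "(\<integral>s. indicator {a..b} s *\<^sub>R (p * (duality_map p (v s) * v' s)) \<partial>lborel)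
      = abs_pow p (v b) - abs_pow p (v a)"
  proof (rule integral_FTC_atLeastAtMost[OF a_le_b])
    fix x
    have "((\<lambda>s. abs_pow p (v s)) has_real_derivative p * duality_map p (v x) * v' x) (at x)"
      using DERIV_chain2[OF has_real_derivative_abs_pow[OF p] has_deriv] .
    then show "((\<lambda>s. abs_pow p (v s)) has_vector_derivative p * (duality_map p (v x) * v' x))
        (at x within {a..b})"
      by (simp add: has_real_derivative_iff_has_vector_derivative has_vector_derivative_at_within mult.assoc)
  next
    show "continuous_on {a..b} (\<lambda>s. p * (duality_map p (v s) * v' s))"
      using p by (intro continuous_intros continuous_on_duality_map_compose
          continuous_on_subset[OF continuous] continuous_on_subset[OF continuous_deriv]) auto
  qed
  moreover have "(\<integral>s. indicator {a..b} s *\<^sub>R (p * (duality_map p (v s) * v' s)) \<partial>lborel)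
      = (\<integral>s. p * (duality_map p (v s) * v' s) \<partial>lborel)"
    by (rule Bochner_Integration.integral_cong[OF refl])
       (use deriv_vanishes in \<open>force simp: indicator_def not_le\<close>)
  ultimately have "p * (\<integral>s. duality_map p (v s) * v' s \<partial>lborel) = 0"
    using vanishes[of a] vanishes[of b] by (simp add: abs_pow_def)
  then show ?thesis using p by simp
qed

lemma integral_abs_pow_deriv_plus_ge:
  assumes p: "p \<ge> 2" and k: "k \<ge> 0"
  shows "k powr p * (\<integral>s. abs_pow p (v s) \<partial>lborel) + cp p * (\<integral>s. abs_pow p (v' s) \<partial>lborel)
    \<le> (\<integral>s. abs_pow p (v' s + k * v s) \<partial>lborel)"
proof -
  have cont: "continuous_on UNIV (\<lambda>s. abs_pow p (v s))" "continuous_on UNIV (\<lambda>s. abs_pow p (v' s))"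
    "continuous_on UNIV (\<lambda>s. abs_pow p (v' s + k * v s))"
    "continuous_on UNIV (\<lambda>s. duality_map p (v s) * v' s)"
    using p by (auto intro!: continuous_on_abs_pow_compose continuous_on_duality_map_compose
        continuous_intros continuous continuous_deriv)
  have int: "integrable lborel (\<lambda>s. abs_pow p (v s))" "integrable lborel (\<lambda>s. abs_pow p (v' s))"
    "integrable lborel (\<lambda>s. abs_pow p (v' s + k * v s))"
    "integrable lborel (\<lambda>s. duality_map p (v s) * v' s)"
    by (rule integrable_vanishing_with[OF cont(1)] integrable_vanishing_with[OF cont(2)]
        integrable_vanishing_with[OF cont(3)] integrable_vanishing_with[OF cont(4)],
        simp add: abs_pow_def)+
  have "k powr p * abs_pow p (v s) + p * k powr (p - 1) * (duality_map p (v s) * v' s)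
      + cp p * abs_pow p (v' s) \<le> abs_pow p (v' s + k * v s)" for s
  proof -
    have "abs_pow p (- k * v s) = k powr p * abs_pow p (v s)"
      using k abs_pow_mult[of p "- k" "v s"] by simp
    moreover have "duality_map p (- k * v s) = - (k powr (p - 1) * duality_map p (v s))"
      using k duality_map_minus[of p "k * v s"] duality_map_mult[of k p "v s"] by simp
    ultimately show ?thesis
      using abs_pow_diff_ge[OF p, of "- k * v s" "v' s"] by (simp add: algebra_simps)
  qed
  then have "(\<integral>s. k powr p * abs_pow p (v s) + p * k powr (p - 1) * (duality_map p (v s) * v' s)
      + cp p * abs_pow p (v' s) \<partial>lborel) \<le> (\<integral>s. abs_pow p (v' s + k * v s) \<partial>lborel)"
    using int by (intro integral_mono) auto
  then show ?thesis
    using int integral_duality_map_deriv[OF p] by simp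
qed

lemma deriv_bounded:
  obtains M where "\<And>s. \<bar>v' s\<bar> \<le> M"
proof -
  have "compact (v' ` {a..b})"
    by (rule compact_continuous_image[OF continuous_on_subset[OF continuous_deriv]]) auto
  then obtain M where "\<forall>x\<in>{a..b}. \<bar>v' x\<bar> \<le> M"
    by (auto dest!: compact_imp_bounded simp: bounded_iff)
  then have M: "\<And>s. s \<in> {a..b} \<Longrightarrow> \<bar>v' s\<bar> \<le> M" by blast
  have "0 \<le> M" using M[of a] a_le_b by (auto intro: order_trans[OF abs_ge_zero])
  then have "\<bar>v' s\<bar> \<le> M" for s
    using M[of s] deriv_vanishes[of s] by (cases "s \<in> {a..b}") auto
  then show ?thesis by (rule that)
qed

lemma hardy_one_sided:
  fixes s0 c :: real
  assumes p: "p \<ge> 2" and c: "c = 1 \<or> c = -1"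
  defines "S \<equiv> if c = 1 then {s0<..} else {..<s0}"
  shows "ennreal (((p - 1) / p) powr p) * (\<integral>\<^sup>+ s. ennreal (indicator S s * diff_quotient_pow v p s0 s) \<partial>lborel)
     \<le> (\<integral>\<^sup>+ s. ennreal (indicator S s * abs_pow p (v' s)) \<partial>lborel)"
proof -
  obtain M where M: "\<And>s. \<bar>v' s\<bar> \<le> M" using deriv_bounded by blast
  have c0: "c \<noteq> 0" "\<bar>c\<bar> = 1" using c by auto
  have ind: "indicator S (s0 + c * x) = (indicator {0<..} x :: real)" for x
    using c by (auto simp: S_def indicator_def)
  have [measurable]: "S \<in> sets borel" by (simp add: S_def)
  have quotient: "diff_quotient_pow v p s0 (s0 + c * x) = abs_pow p ((v (s0 + c * x) - v s0) / x)"
    if "x > 0" for x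
    using that c0 abs_pow_mult[of p "1 / x"] by (simp add: diff_quotient_pow_def abs_mult powr_divide)
  have "(\<integral>\<^sup>+ s. ennreal (indicator S s * diff_quotient_pow v p s0 s) \<partial>lborel)
      = \<bar>c\<bar> * (\<integral>\<^sup>+ x. ennreal (indicator S (s0 + c * x) * diff_quotient_pow v p s0 (s0 + c * x)) \<partial>lborel)"
    using p unfolding diff_quotient_pow_def by (intro nn_integral_real_affine[OF _ c0(1)]) measurable
  also have "\<dots> = (\<integral>\<^sup>+ x. ennreal (indicator {0<..} x * abs_pow p ((v (s0 + c * x) - v s0) / x)) \<partial>lborel)"
    unfolding c0(2) ind ennreal_1 mult_1 by (intro nn_integral_cong) (auto simp: quotient indicator_def)
  finally have lhs: "(\<integral>\<^sup>+ s. ennreal (indicator S s * diff_quotient_pow v p s0 s) \<partial>lborel) = \<dots>" .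
  have "(\<integral>\<^sup>+ s. ennreal (indicator S s * abs_pow p (v' s)) \<partial>lborel)
      = \<bar>c\<bar> * (\<integral>\<^sup>+ x. ennreal (indicator S (s0 + c * x) * abs_pow p (v' (s0 + c * x))) \<partial>lborel)"
    using p by (intro nn_integral_real_affine[OF _ c0(1)]) measurable
  also have "\<dots> = (\<integral>\<^sup>+ x. ennreal (indicator {0<..} x * abs_pow p (c * v' (s0 + c * x))) \<partial>lborel)"
    unfolding c0(2) ind abs_pow_mult by simp
  finally have rhs: "(\<integral>\<^sup>+ s. ennreal (indicator S s * abs_pow p (v' s)) \<partial>lborel) = \<dots>" .
  show ?thesis
    unfolding lhs rhs
  proof (rule hardy_half_line[OF p has_real_derivative_affine_comp_diff[OF has_deriv]])
    show "continuous_on UNIV (\<lambda>t. c * v' (s0 + c * t))"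
      by (intro continuous_intros continuous_on_compose2[OF continuous_deriv]) auto
    show "\<bar>c * v' (s0 + c * t)\<bar> \<le> M" for t
      using M[of "s0 + c * t"] c0 by (simp add: abs_mult)
  qed simp
qed

lemma hardy_diff_quotient:
  assumes p: "p \<ge> 2"
  shows "ennreal (((p - 1) / p) powr p) * (\<integral>\<^sup>+ s. ennreal (diff_quotient_pow v p s0 s) \<partial>lborel)
    \<le> ennreal (\<integral>s. abs_pow p (v' s) \<partial>lborel)"
proof -
  define \<beta> where "\<beta> = ennreal (((p - 1) / p) powr p)"
  have split: "ennreal (diff_quotient_pow v p s0 s) = ennreal (indicator {s0<..} s * diff_quotient_pow v p s0 s)
      + ennreal (indicator {..<s0} s * diff_quotient_pow v p s0 s)" for s
    by (cases s s0 rule: linorder_cases) (auto simp: diff_quotient_pow_def indicator_def)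
  have "(\<integral>\<^sup>+ s. ennreal (diff_quotient_pow v p s0 s) \<partial>lborel)
      = (\<integral>\<^sup>+ s. ennreal (indicator {s0<..} s * diff_quotient_pow v p s0 s) \<partial>lborel)
      + (\<integral>\<^sup>+ s. ennreal (indicator {..<s0} s * diff_quotient_pow v p s0 s) \<partial>lborel)"
    using p unfolding split by (intro nn_integral_add) (measurable, simp add: diff_quotient_pow_def)+
  then have "\<beta> * (\<integral>\<^sup>+ s. ennreal (diff_quotient_pow v p s0 s) \<partial>lborel)
      = \<beta> * (\<integral>\<^sup>+ s. ennreal (indicator {s0<..} s * diff_quotient_pow v p s0 s) \<partial>lborel)
      + \<beta> * (\<integral>\<^sup>+ s. ennreal (indicator {..<s0} s * diff_quotient_pow v p s0 s) \<partial>lborel)"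
    by (simp add: distrib_left)
  also have "\<dots> \<le> (\<integral>\<^sup>+ s. ennreal (indicator {s0<..} s * abs_pow p (v' s)) \<partial>lborel)
      + (\<integral>\<^sup>+ s. ennreal (indicator {..<s0} s * abs_pow p (v' s)) \<partial>lborel)"
    using hardy_one_sided[OF p, of 1 s0] hardy_one_sided[OF p, of "-1" s0]
    unfolding \<beta>_def by (intro add_mono) auto
  also have "\<dots> = (\<integral>\<^sup>+ s. ennreal (indicator {s0<..} s * abs_pow p (v' s))
      + ennreal (indicator {..<s0} s * abs_pow p (v' s)) \<partial>lborel)"
    using p by (intro nn_integral_add[symmetric]) measurable
  also have "\<dots> \<le> (\<integral>\<^sup>+ s. ennreal (abs_pow p (v' s)) \<partial>lborel)"
    by (intro nn_integral_mono) (auto simp: indicator_def abs_pow_nonneg)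
  also have "\<dots> = ennreal (\<integral>s. abs_pow p (v' s) \<partial>lborel)"
    using p by (intro nn_integral_eq_integral integrable_vanishing_with continuous_on_abs_pow_compose
        continuous_deriv) (auto simp: abs_pow_def abs_pow_nonneg)
  finally show ?thesis unfolding \<beta>_def .
qed

lemma diff_quotient_le_remainder:
  assumes p: "p \<ge> 2" and k: "k \<ge> 0"
  shows "ennreal (cp p * ((p - 1) / p) powr p) * (\<integral>\<^sup>+ s. ennreal (diff_quotient_pow v p s0 s) \<partial>lborel)
    \<le> ennreal ((\<integral>s. abs_pow p (v' s + k * v s) \<partial>lborel) - k powr p * (\<integral>s. abs_pow p (v s) \<partial>lborel))"
proof -
  have "ennreal (cp p * ((p - 1) / p) powr p) * (\<integral>\<^sup>+ s. ennreal (diff_quotient_pow v p s0 s) \<partial>lborel)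
      = ennreal (cp p) * (ennreal (((p - 1) / p) powr p) * (\<integral>\<^sup>+ s. ennreal (diff_quotient_pow v p s0 s) \<partial>lborel))"
    using cp_nonneg[OF p] by (simp add: ennreal_mult mult.assoc)
  also have "\<dots> \<le> ennreal (cp p) * ennreal (\<integral>s. abs_pow p (v' s) \<partial>lborel)"
    by (intro mult_left_mono hardy_diff_quotient[OF p]) simp
  also have "\<dots> = ennreal (cp p * (\<integral>s. abs_pow p (v' s) \<partial>lborel))"
    using cp_nonneg[OF p] by (simp add: ennreal_mult')
  also have "\<dots> \<le> ennreal ((\<integral>s. abs_pow p (v' s + k * v s) \<partial>lborel) - k powr p * (\<integral>s. abs_pow p (v s) \<partial>lborel))"
    using integral_abs_pow_deriv_plus_ge[OF p k] by (intro ennreal_leI) simp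
  finally show ?thesis .
qed

end

section \<open>Polar coordinates for a homogeneous quasi-norm\<close>

lemma dil_inner: "b \<in> Basis \<Longrightarrow> dil nu l x \<bullet> b = l powr nu b * (x \<bullet> b)"
  by (simp add: dil_def inner_sum_left inner_Basis if_distrib cong: if_cong)

lemma dil_one: "dil nu 1 x = x"
  by (rule euclidean_eqI) (simp add: dil_inner)

lemma borel_measurable_dil[measurable]: "dil nu l \<in> borel_measurable borel"
  unfolding dil_def by (intro borel_measurable_continuous_onI continuous_intros)

lemma continuous_on_dil_param: "continuous_on {0<..} (\<lambda>l. dil nu l x)"
  unfolding dil_def by (intro continuous_intros) auto

locale homogeneous_quasi_norm =
  fixes nu :: "'a::euclidean_space \<Rightarrow> real" and N :: "'a \<Rightarrow> real"
  assumes nu_pos: "\<And>b. b \<in> Basis \<Longrightarrow> nu b > 0"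
    and quasi_norm: "hom_quasi_norm nu N"
begin

abbreviation "Q \<equiv> hom_dim nu"

lemma hom_dim_pos: "Q > 0"
  unfolding hom_dim_def by (rule sum_pos) (auto simp: nu_pos)

lemma N_continuous: "continuous_on UNIV N"
  and N_nonneg: "N x \<ge> 0"
  and N_eq_0_iff: "N x = 0 \<longleftrightarrow> x = 0"
  and N_dil: "l > 0 \<Longrightarrow> N (dil nu l x) = l * N x"
  using quasi_norm by (auto simp: hom_quasi_norm_def)

lemma N_pos: "x \<noteq> 0 \<Longrightarrow> N x > 0"
  using N_nonneg[of x] N_eq_0_iff[of x] by auto

lemma N_measurable[measurable]: "N \<in> borel_measurable borel"
  by (rule borel_measurable_continuous_onI[OF N_continuous])

lemma emeasure_lborel_dil:
  assumes l: "l > 0" and A: "A \<in> sets borel"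
  shows "emeasure lborel A = ennreal (l powr Q) * emeasure lborel (dil nu l -` A)"
proof -
  have "lborel = density (distr lborel borel (\<lambda>x. 0 + (\<Sum>j\<in>Basis. (l powr nu j * (x \<bullet> j)) *\<^sub>R j)))
      (\<lambda>_. (\<Prod>j\<in>Basis. \<bar>l powr nu j\<bar>))"
    by (rule lborel_affine_euclidean) (use l in auto)
  also have "(\<lambda>x. 0 + (\<Sum>j\<in>Basis. (l powr nu j * (x \<bullet> j)) *\<^sub>R j)) = dil nu l"
    by (simp add: dil_def fun_eq_iff)
  also have "(\<Prod>j\<in>Basis. \<bar>l powr nu j\<bar>) = l powr Q"
    using l by (simp add: hom_dim_def powr_sum)
  finally have "emeasure lborel A = emeasure (density (distr lborel borel (dil nu l)) (\<lambda>_. ennreal (l powr Q))) A"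
    by simp
  also have "\<dots> = ennreal (l powr Q) * emeasure (distr lborel borel (dil nu l)) A"
    using A by (simp add: emeasure_density nn_integral_cmult_indicator)
  also have "\<dots> = ennreal (l powr Q) * emeasure lborel (dil nu l -` A)"
    using A by (simp add: emeasure_distr)
  finally show ?thesis .
qed

lemma dil_tendsto_zero: "((\<lambda>l. dil nu l x) \<longlongrightarrow> 0) (at_right 0)"
proof -
  have "((\<lambda>l. \<Sum>b\<in>Basis. (l powr nu b * (x \<bullet> b)) *\<^sub>R b) \<longlongrightarrow> (\<Sum>b\<in>Basis. (0 * (x \<bullet> b)) *\<^sub>R b)) (at_right 0)"
  proof (intro tendsto_intros)
    fix b :: 'a assume b: "b \<in> Basis"
    show "((\<lambda>l. l powr nu b) \<longlongrightarrow> 0) (at_right 0)"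
      using nu_pos[OF b] by (intro tendsto_zero_powrI)
        (auto simp: eventually_at_right_field intro: tendsto_ident_at exI[of _ 1])
  qed
  then show ?thesis by (simp add: dil_def)
qed

lemma dil_onto_unit_sphere:
  assumes x: "norm x \<ge> 1"
  obtains l where "0 < l" "l \<le> 1" "norm (dil nu l x) = 1"
proof -
  have "\<forall>\<^sub>F l in at_right 0. norm (dil nu l x) < 1"
    using tendsto_norm[OF dil_tendsto_zero[of x]] by (rule order_tendstoD) simp
  then obtain b where b: "0 < b" "\<And>l. 0 < l \<Longrightarrow> l < b \<Longrightarrow> norm (dil nu l x) < 1"
    unfolding eventually_at_right_field by auto
  define \<delta> where "\<delta> = min (b / 2) 1"
  have \<delta>: "0 < \<delta>" "\<delta> \<le> 1" "norm (dil nu \<delta> x) < 1"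
    using b by (auto simp: \<delta>_def)
  have "\<exists>l. \<delta> \<le> l \<and> l \<le> 1 \<and> norm (dil nu l x) = 1"
  proof (rule IVT')
    show "continuous_on {\<delta>..1} (\<lambda>l. norm (dil nu l x))"
      using \<delta> by (intro continuous_on_norm continuous_on_subset[OF continuous_on_dil_param]) auto
  qed (use \<delta> x in \<open>auto simp: dil_one\<close>)
  then show ?thesis using \<delta>(1) that by (meson order.strict_trans2)
qed

lemma quasi_norm_bounded_below:
  obtains m where "m > 0" "\<And>x. norm x \<ge> 1 \<Longrightarrow> N x \<ge> m"
proof -
  obtain b :: 'a where "b \<in> Basis" using nonempty_Basis by blast
  then have "sphere (0::'a) 1 \<noteq> {}" by (auto intro!: exI[of _ b])
  from continuous_attains_inf[OF compact_sphere this continuous_on_subset[OF N_continuous]]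
  obtain y where y: "y \<in> sphere 0 1" "\<And>z. z \<in> sphere 0 1 \<Longrightarrow> N y \<le> N z"
    by blast
  have "N y \<le> N x" if x: "norm x \<ge> 1" for x
  proof -
    obtain l where l: "0 < l" "l \<le> 1" "norm (dil nu l x) = 1"
      using dil_onto_unit_sphere[OF x] .
    have "N y \<le> N (dil nu l x)" using y(2) l(3) by simp
    also have "\<dots> \<le> N x"
      using l N_nonneg[of x] mult_right_mono[of l 1 "N x"] by (simp add: N_dil)
    finally show ?thesis .
  qed
  moreover have "N y > 0" using y(1) by (intro N_pos) auto
  ultimately show ?thesis using that by blast
qed

lemma emeasure_quasi_ball:
  assumes r: "r > 0"
  shows "emeasure lborel {x. N x < r} = ennreal (r powr Q) * emeasure lborel {x. N x < 1}"
proof -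
  have "dil nu r -` {x. N x < r} = {x. N x < 1}" using r by (auto simp: N_dil)
  then show ?thesis using emeasure_lborel_dil[OF r, of "{x. N x < r}"] by simp
qed

lemma emeasure_unit_quasi_ball_finite: "emeasure lborel {x. N x < 1} < \<infinity>"
proof -
  obtain m where m: "m > 0" "\<And>x. norm x \<ge> 1 \<Longrightarrow> N x \<ge> m"
    using quasi_norm_bounded_below by blast
  have "{x. N x < m} \<subseteq> ball 0 1" using m(2) by (force simp: not_le[symmetric])
  then have "emeasure lborel {x. N x < m} \<le> emeasure lborel (ball (0::'a) 1)"
    by (intro emeasure_mono) auto
  also have "\<dots> < \<infinity>" by (rule emeasure_lborel_ball_finite)
  finally show ?thesis using emeasure_quasi_ball[OF m(1)] m(1) by (auto simp: ennreal_mult_less_top)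
qed

definition unit_ball_volume :: real where
  "unit_ball_volume = enn2real (emeasure lborel {x. N x < 1})"

lemma emeasure_unit_quasi_ball: "emeasure lborel {x. N x < 1} = ennreal unit_ball_volume"
  and unit_ball_volume_nonneg: "unit_ball_volume \<ge> 0"
  using emeasure_unit_quasi_ball_finite by (auto simp: unit_ball_volume_def ennreal_enn2real_if)

text \<open>\<open>Q |B\<^sub>1|\<close> is the total mass of the unit quasi-sphere in polar coordinates.\<close>

definition sphere_measure :: real where
  "sphere_measure = Q * unit_ball_volume"

lemma sphere_measure_nonneg: "sphere_measure \<ge> 0"
  using hom_dim_pos unit_ball_volume_nonneg by (simp add: sphere_measure_def)

definition log_polar_density :: "real \<Rightarrow> real" where
  "log_polar_density s = sphere_measure * exp (- Q * s)"

lemma log_polar_density_eq: "log_polar_density s = sphere_measure * exp (- s) powr Q"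
  by (simp add: log_polar_density_def powr_def)

lemma emeasure_distr_neg_ln_N_greaterThan:
  "emeasure (distr lborel borel (\<lambda>x. - ln (N x))) {t<..} = ennreal (unit_ball_volume * exp (- Q * t))"
proof -
  have "emeasure (distr lborel borel (\<lambda>x. - ln (N x))) {t<..} = emeasure lborel {x. t < - ln (N x)}"
    by (subst emeasure_distr) (auto simp: vimage_def)
  also have "\<dots> = emeasure lborel ({x. t < - ln (N x)} - {0})"
    by (rule emeasure_Diff_null_set[symmetric]) (auto intro: finite_imp_null_set_lborel)
  also have "{x. t < - ln (N x)} - {0} = {x. N x < exp (- t)} - {0}"
  proof -
    have "t < - ln (N x) \<longleftrightarrow> N x < exp (- t)" if "x \<noteq> 0" for x
    proof -
      have "N x < exp (- t) \<longleftrightarrow> ln (N x) < - t"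
        using N_pos[OF that] by (metis exp_less_cancel_iff exp_ln)
      then show ?thesis by linarith
    qed
    then show ?thesis by auto
  qed
  also have "emeasure lborel \<dots> = emeasure lborel {x. N x < exp (- t)}"
    by (rule emeasure_Diff_null_set) (auto intro: finite_imp_null_set_lborel)
  also have "\<dots> = ennreal (exp (- t) powr Q) * ennreal unit_ball_volume"
    by (simp add: emeasure_quasi_ball emeasure_unit_quasi_ball)
  finally show ?thesis
    using unit_ball_volume_nonneg by (simp add: powr_def ennreal_mult mult.commute)
qed

lemma distr_neg_ln_N: "distr lborel borel (\<lambda>x. - ln (N x)) = density lborel (\<lambda>s. ennreal (log_polar_density s))"
proof (rule measure_eqI_lessThan)
  fix t :: real
  show "emeasure (distr lborel borel (\<lambda>x. - ln (N x))) {t<..} < \<infinity>"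
    by (simp add: emeasure_distr_neg_ln_N_greaterThan)
  have "emeasure (density lborel (\<lambda>s. ennreal (log_polar_density s))) {t<..}
      = (\<integral>\<^sup>+ s. ennreal (log_polar_density s) * indicator {t..} s \<partial>lborel)"
    by (subst emeasure_density)
       (auto simp: log_polar_density_def intro!: nn_integral_cong_AE
         AE_mp[OF AE_lborel_singleton[of t] AE_I2] split: split_indicator)
  also have "\<dots> = ennreal (0 - (- unit_ball_volume * exp (- Q * t)))"
  proof (rule nn_integral_FTC_atLeast)
    show "((\<lambda>s. - unit_ball_volume * exp (- Q * s)) has_real_derivative log_polar_density s) (at s)" for s
      by (auto intro!: derivative_eq_intros simp: log_polar_density_def sphere_measure_def algebra_simps)
    show "0 \<le> log_polar_density s" for s
      using sphere_measure_nonneg by (simp add: log_polar_density_def)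
    have "((\<lambda>s. exp (- Q * s)) \<longlongrightarrow> 0) at_top"
      using hom_dim_pos by (intro filterlim_compose[OF exp_at_bot] filterlim_tendsto_neg_mult_at_bot
          [OF tendsto_const _ filterlim_ident]) auto
    then show "((\<lambda>s. - unit_ball_volume * exp (- Q * s)) \<longlongrightarrow> 0) at_top"
      using tendsto_mult_right_zero by blast
  qed (simp add: log_polar_density_def)
  finally show "emeasure (distr lborel borel (\<lambda>x. - ln (N x))) {t<..}
      = emeasure (density lborel (\<lambda>s. ennreal (log_polar_density s))) {t<..}"
    by (simp add: emeasure_distr_neg_ln_N_greaterThan)
qed simp_all

lemma nn_integral_log_polar:
  assumes [measurable]: "h \<in> borel_measurable borel"
    and h: "\<And>x. x \<noteq> 0 \<Longrightarrow> g x = h (- ln (N x))"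
  shows "(\<integral>\<^sup>+ x. g x \<partial>lborel) = (\<integral>\<^sup>+ s. ennreal (log_polar_density s) * h s \<partial>lborel)"
proof -
  have "(\<integral>\<^sup>+ x. g x \<partial>lborel) = (\<integral>\<^sup>+ x. h (- ln (N x)) \<partial>lborel)"
    by (rule nn_integral_cong_AE) (use AE_lborel_singleton[of 0] in \<open>auto elim!: eventually_mono simp: h\<close>)
  also have "\<dots> = (\<integral>\<^sup>+ s. h s \<partial>distr lborel borel (\<lambda>x. - ln (N x)))"
    by (rule nn_integral_distr[symmetric]) auto
  also have "\<dots> = (\<integral>\<^sup>+ s. ennreal (log_polar_density s) * h s \<partial>lborel)"
    unfolding distr_neg_ln_N by (rule nn_integral_density) (auto simp: log_polar_density_def)
  finally show ?thesis .
qed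


lemma nn_integral_log_polar_eq:
  assumes [measurable]: "h \<in> borel_measurable borel" "H \<in> borel_measurable borel"
    and g: "\<And>x. x \<noteq> 0 \<Longrightarrow> g x = h (- ln (N x))"
    and h: "\<And>s. h s \<ge> 0" "\<And>s. log_polar_density s * h s = sphere_measure * H s"
    and H: "\<And>s. H s \<ge> 0"
  shows "(\<integral>\<^sup>+ x. ennreal (g x) \<partial>lborel) = ennreal sphere_measure * (\<integral>\<^sup>+ s. ennreal (H s) \<partial>lborel)"
proof -
  have "(\<integral>\<^sup>+ x. ennreal (g x) \<partial>lborel) = (\<integral>\<^sup>+ s. ennreal (log_polar_density s) * ennreal (h s) \<partial>lborel)"
    by (rule nn_integral_log_polar) (auto simp: g)
  also have "\<dots> = (\<integral>\<^sup>+ s. ennreal sphere_measure * ennreal (H s) \<partial>lborel)"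
    using h H sphere_measure_nonneg
    by (intro nn_integral_cong) (simp add: ennreal_mult[symmetric] log_polar_density_def)
  also have "\<dots> = ennreal sphere_measure * (\<integral>\<^sup>+ s. ennreal (H s) \<partial>lborel)"
    by (rule nn_integral_cmult) measurable
  finally show ?thesis .
qed

lemma integral_log_polar_eq:
  assumes [measurable]: "g \<in> borel_measurable borel" "h \<in> borel_measurable borel"
    and g: "\<And>x. x \<noteq> 0 \<Longrightarrow> g x = h (- ln (N x))" "\<And>x. g x \<ge> 0"
    and h: "\<And>s. h s \<ge> 0" "\<And>s. log_polar_density s * h s = sphere_measure * H s"
    and H: "integrable lborel H" "\<And>s. H s \<ge> 0"
  shows "(\<integral>x. g x \<partial>lborel) = sphere_measure * (\<integral>s. H s \<partial>lborel)"
proof -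
  have [measurable]: "H \<in> borel_measurable borel"
    using borel_measurable_integrable[OF H(1)] by simp
  have "(\<integral>\<^sup>+ x. ennreal (g x) \<partial>lborel) = ennreal sphere_measure * ennreal (\<integral>s. H s \<partial>lborel)"
    using nn_integral_log_polar_eq[of h H g] g(1) h H(2)
    by (simp add: nn_integral_eq_integral[OF H(1)])
  then show ?thesis
    using sphere_measure_nonneg H
    by (subst integral_eq_nn_integral) (auto simp: g(2) ennreal_mult[symmetric] integral_nonneg)
qed

end

section \<open>Radial test functions in logarithmic coordinates\<close>

locale radial_test_function = homogeneous_quasi_norm nu N
  for nu :: "'a::euclidean_space \<Rightarrow> real" and N +
  fixes f :: "'a \<Rightarrow> real" and ft :: "real \<Rightarrow> real"
  assumes test_function: "C0_infty_punctured f"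
    and radial: "\<And>x. f x = ft (N x)"
begin

lemma f_differentiable: "f differentiable at x"
  and continuous_on_partial_deriv: "b \<in> Basis \<Longrightarrow> continuous_on UNIV (\<lambda>x. frechet_derivative f (at x) b)"
  and f_continuous: "continuous_on UNIV f"
proof -
  have "Ck 1 f" "Ck 0 f"
    using test_function by (auto simp: C0_infty_punctured_def smooth_fun_def)
  then show "f differentiable at x" "b \<in> Basis \<Longrightarrow> continuous_on UNIV (\<lambda>x. frechet_derivative f (at x) b)"
    "continuous_on UNIV f" by auto
qed

definition unit_point :: 'a where
  "unit_point = (SOME y. N y = 1)"

lemma N_unit_point: "N unit_point = 1"
proof -
  obtain b :: 'a where b: "b \<in> Basis" using nonempty_Basis by blast
  then have "N (dil nu (1 / N b) b) = 1" using N_pos[of b] by (auto simp: N_dil nonzero_Basis)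
  then show ?thesis unfolding unit_point_def by (rule someI)
qed

definition dil_curve_deriv :: "real \<Rightarrow> 'a" where
  "dil_curve_deriv r = (\<Sum>b\<in>Basis. (nu b * r powr (nu b - 1) * (unit_point \<bullet> b)) *\<^sub>R b)"

definition profile_deriv :: "real \<Rightarrow> real" where
  "profile_deriv r = frechet_derivative f (at (dil nu r unit_point)) (dil_curve_deriv r)"

lemma ft_eq_dil_unit_point: "r > 0 \<Longrightarrow> ft r = f (dil nu r unit_point)"
  by (simp add: radial N_dil N_unit_point)

lemma has_vector_derivative_dil_curve:
  assumes r: "r > 0"
  shows "((\<lambda>r. dil nu r unit_point) has_vector_derivative dil_curve_deriv r) (at r)"
  unfolding dil_def[abs_def] dil_curve_deriv_def
proof (rule has_vector_derivative_sum)
  fix b :: 'a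
  have "((\<lambda>r. r powr nu b * (unit_point \<bullet> b)) has_real_derivative
      nu b * r powr (nu b - 1) * (unit_point \<bullet> b)) (at r)"
    by (rule DERIV_cmult_right[OF has_real_derivative_powr[OF r]])
  from has_vector_derivative_scaleR[OF this has_vector_derivative_const[of b]]
  show "((\<lambda>r. (r powr nu b * (unit_point \<bullet> b)) *\<^sub>R b) has_vector_derivative
      (nu b * r powr (nu b - 1) * (unit_point \<bullet> b)) *\<^sub>R b) (at r)"
    by simp
qed

lemma has_real_derivative_profile:
  assumes r: "r > 0"
  shows "(ft has_real_derivative profile_deriv r) (at r)"
proof -
  have "(f has_derivative frechet_derivative f (at (dil nu r unit_point))) (at (dil nu r unit_point))"
    using f_differentiable frechet_derivative_works by blast
  from vector_derivative_diff_chain_within[OF has_vector_derivative_dil_curve[OF r]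
      has_derivative_at_withinI[OF this]]
  have "((\<lambda>r. f (dil nu r unit_point)) has_real_derivative profile_deriv r) (at r)"
    by (simp add: profile_deriv_def o_def has_real_derivative_iff_has_vector_derivative)
  then show ?thesis
    by (rule has_field_derivative_transform_within_open[where S="{0<..}"]) (use r in \<open>auto simp: ft_eq_dil_unit_point\<close>)
qed

lemma continuous_on_profile: "continuous_on {0<..} ft"
  using has_real_derivative_profile by (intro continuous_at_imp_continuous_on) (auto intro: DERIV_isCont)

lemma continuous_on_profile_deriv: "continuous_on {0<..} profile_deriv"
proof -
  have "linear (frechet_derivative f (at x))" for x
    using f_differentiable frechet_derivative_works has_derivative_bounded_linear bounded_linear.linear
    by blast
  then have "profile_deriv r = (\<Sum>b\<in>Basis. (dil_curve_deriv r \<bullet> b) * frechet_derivative f (at (dil nu r unit_point)) b)" for r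
    using Linear_Algebra.linear_componentwise[of "frechet_derivative f (at (dil nu r unit_point))" "dil_curve_deriv r" 1]
    by (simp add: profile_deriv_def)
  moreover have "continuous_on {0<..} (\<lambda>r. \<Sum>b\<in>Basis. (dil_curve_deriv r \<bullet> b) * frechet_derivative f (at (dil nu r unit_point)) b)"
    unfolding dil_curve_deriv_def
    by (intro continuous_intros continuous_on_compose2[OF continuous_on_partial_deriv continuous_on_dil_param])
       auto
  ultimately show ?thesis by simp
qed

lemma radial_deriv_eq_profile_deriv:
  assumes x: "x \<noteq> 0"
  shows "radial_deriv nu N f x = profile_deriv (N x)"
proof -
  define y where "y = dil nu (1 / N x) x"
  have Nx: "N x > 0" using N_pos[OF x] .
  have "N y = 1" using Nx by (simp add: y_def N_dil)
  then have "((\<lambda>r. f (dil nu r y)) has_real_derivative profile_deriv (N x)) (at (N x))"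
    using Nx by (intro has_field_derivative_transform_within_open[OF has_real_derivative_profile, where S="{0<..}"])
      (auto simp: radial N_dil)
  then show ?thesis using x by (simp add: radial_deriv_def y_def DERIV_imp_deriv)
qed

lemma borel_measurable_radial_deriv[measurable]: "radial_deriv nu N f \<in> borel_measurable borel"
proof -
  have "radial_deriv nu N f = (\<lambda>x. if x \<in> - {0} then profile_deriv (N x) else 0)"
  proof
    fix x
    show "radial_deriv nu N f x = (if x \<in> - {0} then profile_deriv (N x) else 0)"
      by (cases "x = 0") (simp add: radial_deriv_def, simp add: radial_deriv_eq_profile_deriv)
  qed
  also have "\<dots> \<in> borel_measurable borel"
  proof (rule borel_measurable_continuous_on_if)
    show "continuous_on (- {0}) (\<lambda>x. profile_deriv (N x))"
      by (rule continuous_on_compose2[OF continuous_on_profile_deriv continuous_on_subset[OF N_continuous]])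
         (use N_pos in fastforce)+
  qed auto
  finally show ?thesis .
qed

lemma profile_support:
  obtains m M where "0 < m" "m \<le> M" "\<And>r. 0 < r \<Longrightarrow> r < m \<or> M < r \<Longrightarrow> ft r = 0"
proof -
  obtain K where K: "compact K" "0 \<notin> K" "\<And>x. x \<notin> K \<Longrightarrow> f x = 0"
    using test_function by (auto simp: C0_infty_punctured_def)
  have ft_zero: "ft r = 0" if "0 < r" "dil nu r unit_point \<notin> K" for r
    using K(3) that by (simp add: ft_eq_dil_unit_point)
  show ?thesis
  proof (cases "K = {}")
    case True
    have "ft r = 0" if "0 < r" for r
      using ft_zero[OF that] True by simp
    then show ?thesis by (intro that[of 1 1]) simp_all
  next
    case False
    have N_K: "continuous_on K N" by (rule continuous_on_subset[OF N_continuous]) simp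
    obtain x1 where x1: "x1 \<in> K" "\<forall>y\<in>K. N x1 \<le> N y"
      using continuous_attains_inf[OF K(1) False N_K] by blast
    obtain x2 where x2: "x2 \<in> K" "\<forall>y\<in>K. N y \<le> N x2"
      using continuous_attains_sup[OF K(1) False N_K] by blast
    have "ft r = 0" if r: "0 < r" "r < N x1 \<or> N x2 < r" for r
    proof (rule ft_zero[OF r(1)])
      show "dil nu r unit_point \<notin> K"
      proof
        assume "dil nu r unit_point \<in> K"
        moreover have "N (dil nu r unit_point) = r" using r(1) by (simp add: N_dil N_unit_point)
        ultimately have "N x1 \<le> r" "r \<le> N x2"
          using x1(2) x2(2) by auto
        with r(2) show False by linarith
      qed
    qed
    moreover have "x1 \<noteq> 0" using x1(1) K(2) by auto
    then have "0 < N x1" by (rule N_pos)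
    moreover have "N x1 \<le> N x2" using x1(1) x2(2) by simp
    ultimately show ?thesis using that by blast
  qed
qed


definition log_profile :: "real \<Rightarrow> real \<Rightarrow> real" where
  "log_profile k s = exp (- k * s) * ft (exp (- s))"

definition log_profile_deriv :: "real \<Rightarrow> real \<Rightarrow> real" where
  "log_profile_deriv k s = - k * log_profile k s - exp (- k * s) * exp (- s) * profile_deriv (exp (- s))"

lemma has_real_derivative_log_profile: "(log_profile k has_real_derivative log_profile_deriv k s) (at s)"
proof -
  have "((\<lambda>s. ft (exp (- s))) has_real_derivative profile_deriv (exp (- s)) * - exp (- s)) (at s)"
    by (rule DERIV_chain2[OF has_real_derivative_profile]) (auto intro!: derivative_eq_intros)
  moreover have "((\<lambda>s. exp (- k * s)) has_real_derivative exp (- k * s) * (- k)) (at s)"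
    by (auto intro!: derivative_eq_intros)
  ultimately have "(log_profile k has_real_derivative
      exp (- k * s) * (- k) * ft (exp (- s)) + profile_deriv (exp (- s)) * - exp (- s) * exp (- k * s)) (at s)"
    unfolding log_profile_def[abs_def] by (rule DERIV_mult[rotated])
  then show ?thesis by (simp add: log_profile_deriv_def log_profile_def algebra_simps)
qed

lemma continuous_on_log_profile_deriv: "continuous_on UNIV (log_profile_deriv k)"
  unfolding log_profile_deriv_def[abs_def] log_profile_def
  by (intro continuous_intros continuous_on_compose2[OF continuous_on_profile]
      continuous_on_compose2[OF continuous_on_profile_deriv]) auto

lemma log_profile_C1_compact_support:
  obtains a b where "C1_compact_support (log_profile k) (log_profile_deriv k) a b"
proof -
  obtain m M where mM: "0 < m" "m \<le> M" "\<And>r. 0 < r \<Longrightarrow> r < m \<or> M < r \<Longrightarrow> ft r = 0"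
    using profile_support by blast
  have "log_profile k s = 0" if "s \<le> - ln M - 1 \<or> - ln m + 1 \<le> s" for s
  proof -
    have "exp (- s) < m \<or> M < exp (- s)"
    proof (cases "s \<le> - ln M - 1")
      case True
      then have "exp (ln M) < exp (- s)" by simp
      then show ?thesis using mM by simp
    next
      case False
      then have "exp (- s) < exp (ln m)" using that by simp
      then show ?thesis using mM by simp
    qed
    then show ?thesis by (simp add: log_profile_def mM(3))
  qed
  moreover have "ln m \<le> ln M" using mM by simp
  then have "- ln M - 1 \<le> - ln m + 1" by linarith
  ultimately show ?thesis
    by (intro that[of "- ln M - 1" "- ln m + 1"] C1_compact_support.intro
        has_real_derivative_log_profile continuous_on_log_profile_deriv)
qed

lemma log_profile_eq: "log_profile k s = exp (- s) powr k * ft (exp (- s))"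
  by (simp add: log_profile_def powr_def)

lemma log_profile_deriv_plus_eq:
  "log_profile_deriv k s + k * log_profile k s = - (exp (- s) powr (k + 1) * profile_deriv (exp (- s)))"
  by (simp add: log_profile_deriv_def log_profile_def powr_def algebra_simps exp_add[symmetric])

lemma log_polar_density_radial_deriv:
  assumes k: "k * p = Q - p - \<alpha> * p"
  shows "log_polar_density s * (\<bar>profile_deriv (exp (- s))\<bar> powr p / exp (- s) powr (\<alpha> * p))
    = sphere_measure * abs_pow p (log_profile_deriv k s + k * log_profile k s)"
proof -
  define r where "r = exp (- s)"
  have r: "r > 0" by (simp add: r_def)
  have "abs_pow p (log_profile_deriv k s + k * log_profile k s) = r powr ((k + 1) * p) * \<bar>profile_deriv r\<bar> powr p"
    unfolding log_profile_deriv_plus_eq r_def[symmetric] abs_pow_minus abs_pow_mult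
    using r by (simp add: abs_pow_def powr_powr)
  moreover have "Q - \<alpha> * p = (k + 1) * p" using k by (simp add: algebra_simps)
  then have "r powr Q / r powr (\<alpha> * p) = r powr ((k + 1) * p)"
    by (metis powr_diff)
  moreover have "log_polar_density s * (\<bar>profile_deriv r\<bar> powr p / r powr (\<alpha> * p))
      = sphere_measure * (r powr Q / r powr (\<alpha> * p)) * \<bar>profile_deriv r\<bar> powr p"
    by (simp add: log_polar_density_eq r_def)
  ultimately show ?thesis by (simp add: r_def)
qed

lemma log_polar_density_radial:
  assumes k: "k * p = Q - p - \<alpha> * p"
  shows "log_polar_density s * (\<bar>ft (exp (- s))\<bar> powr p / exp (- s) powr ((\<alpha> + 1) * p))
    = sphere_measure * abs_pow p (log_profile k s)"
proof -
  define r where "r = exp (- s)"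
  have r: "r > 0" by (simp add: r_def)
  have "abs_pow p (log_profile k s) = r powr (k * p) * \<bar>ft r\<bar> powr p"
    unfolding log_profile_eq r_def[symmetric] abs_pow_mult using r by (simp add: abs_pow_def powr_powr)
  moreover have "Q - (\<alpha> + 1) * p = k * p" using k by (simp add: algebra_simps)
  then have "r powr Q / r powr ((\<alpha> + 1) * p) = r powr (k * p)"
    by (metis powr_diff)
  moreover have "log_polar_density s * (\<bar>ft r\<bar> powr p / r powr ((\<alpha> + 1) * p))
      = sphere_measure * (r powr Q / r powr ((\<alpha> + 1) * p)) * \<bar>ft r\<bar> powr p"
    by (simp add: log_polar_density_eq r_def)
  ultimately show ?thesis by (simp add: r_def)
qed

lemma log_polar_density_log_distance:
  assumes k: "k * p = Q - p - \<alpha> * p" and R: "R > 0"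
  shows "log_polar_density s * (\<bar>ft (exp (- s)) - (R powr k * ft R) * exp (- s) powr (- k)\<bar> powr p
      / (\<bar>ln (R / exp (- s))\<bar> powr p * exp (- s) powr ((\<alpha> + 1) * p)))
    = sphere_measure * diff_quotient_pow (log_profile k) p (- ln R) s"
proof -
  define r where "r = exp (- s)"
  have r: "r > 0" by (simp add: r_def)
  have "log_profile k s - log_profile k (- ln R) = r powr k * (ft r - (R powr k * ft R) * r powr (- k))"
    using r R by (simp add: log_profile_eq r_def algebra_simps powr_add[symmetric])
  then have "abs_pow p (log_profile k s - log_profile k (- ln R))
      = abs_pow p (r powr k * (ft r - (R powr k * ft R) * r powr (- k)))" by simp
  also have "\<dots> = r powr (k * p) * \<bar>ft r - (R powr k * ft R) * r powr (- k)\<bar> powr p"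
    unfolding abs_pow_mult using r by (simp add: abs_pow_def powr_powr)
  finally have "abs_pow p (log_profile k s - log_profile k (- ln R))
      = r powr (k * p) * \<bar>ft r - (R powr k * ft R) * r powr (- k)\<bar> powr p" .
  moreover have "\<bar>s - - ln R\<bar> = \<bar>ln (R / r)\<bar>"
    using R by (simp add: r_def ln_div)
  moreover have "Q - (\<alpha> + 1) * p = k * p" using k by (simp add: algebra_simps)
  then have "r powr Q / r powr ((\<alpha> + 1) * p) = r powr (k * p)"
    by (metis powr_diff)
  moreover have "log_polar_density s * (\<bar>ft r - (R powr k * ft R) * r powr (- k)\<bar> powr p
      / (\<bar>ln (R / r)\<bar> powr p * r powr ((\<alpha> + 1) * p)))
    = sphere_measure * ((r powr Q / r powr ((\<alpha> + 1) * p))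
      * \<bar>ft r - (R powr k * ft R) * r powr (- k)\<bar> powr p / \<bar>ln (R / r)\<bar> powr p)"
    by (simp add: log_polar_density_eq r_def mult_ac)
  ultimately show ?thesis by (simp add: diff_quotient_pow_def r_def)
qed
lemma borel_measurable_profile_exp[measurable]:
  "(\<lambda>s. ft (exp (- s))) \<in> borel_measurable borel"
  "(\<lambda>s. profile_deriv (exp (- s))) \<in> borel_measurable borel"
  by (auto intro!: borel_measurable_continuous_onI continuous_on_compose2[OF continuous_on_profile]
      continuous_on_compose2[OF continuous_on_profile_deriv] continuous_intros)

lemma integral_radial_deriv_pow:
  assumes p: "p > 0" and k: "k * p = Q - p - \<alpha> * p"
  shows "(\<integral>x. \<bar>radial_deriv nu N f x\<bar> powr p / N x powr (\<alpha> * p) \<partial>lborel)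
    = sphere_measure * (\<integral>s. abs_pow p (log_profile_deriv k s + k * log_profile k s) \<partial>lborel)"
proof -
  obtain a b where "C1_compact_support (log_profile k) (log_profile_deriv k) a b"
    by (rule log_profile_C1_compact_support)
  then interpret v: C1_compact_support "log_profile k" "log_profile_deriv k" a b .
  show ?thesis
  proof (rule integral_log_polar_eq[where h="\<lambda>s. \<bar>profile_deriv (exp (- s))\<bar> powr p / exp (- s) powr (\<alpha> * p)"])
    show "integrable lborel (\<lambda>s. abs_pow p (log_profile_deriv k s + k * log_profile k s))"
      using p by (intro v.integrable_vanishing_with continuous_on_abs_pow_compose continuous_intros
          v.continuous v.continuous_deriv) (simp_all add: abs_pow_def)
    show "\<bar>radial_deriv nu N f x\<bar> powr p / N x powr (\<alpha> * p)
        = \<bar>profile_deriv (exp (- (- ln (N x))))\<bar> powr p / exp (- (- ln (N x))) powr (\<alpha> * p)" if "x \<noteq> 0" for x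
      using that N_pos[OF that] by (simp add: radial_deriv_eq_profile_deriv)
    show "log_polar_density s * (\<bar>profile_deriv (exp (- s))\<bar> powr p / exp (- s) powr (\<alpha> * p))
        = sphere_measure * abs_pow p (log_profile_deriv k s + k * log_profile k s)" for s
      by (rule log_polar_density_radial_deriv[OF k])
  qed (auto simp: abs_pow_nonneg)
qed

lemma integral_radial_pow:
  assumes p: "p > 0" and k: "k * p = Q - p - \<alpha> * p"
  shows "(\<integral>x. \<bar>f x\<bar> powr p / N x powr ((\<alpha> + 1) * p) \<partial>lborel)
    = sphere_measure * (\<integral>s. abs_pow p (log_profile k s) \<partial>lborel)"
proof -
  obtain a b where "C1_compact_support (log_profile k) (log_profile_deriv k) a b"
    by (rule log_profile_C1_compact_support)
  then interpret v: C1_compact_support "log_profile k" "log_profile_deriv k" a b .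
  have [measurable]: "f \<in> borel_measurable borel"
    by (rule borel_measurable_continuous_onI[OF f_continuous])
  show ?thesis
  proof (rule integral_log_polar_eq[where h="\<lambda>s. \<bar>ft (exp (- s))\<bar> powr p / exp (- s) powr ((\<alpha> + 1) * p)"])
    show "integrable lborel (\<lambda>s. abs_pow p (log_profile k s))"
      using p by (intro v.integrable_vanishing_with continuous_on_abs_pow_compose v.continuous)
        (simp_all add: abs_pow_def)
    show "\<bar>f x\<bar> powr p / N x powr ((\<alpha> + 1) * p)
        = \<bar>ft (exp (- (- ln (N x))))\<bar> powr p / exp (- (- ln (N x))) powr ((\<alpha> + 1) * p)" if "x \<noteq> 0" for x
      using that N_pos[OF that] by (simp add: radial)
    show "log_polar_density s * (\<bar>ft (exp (- s))\<bar> powr p / exp (- s) powr ((\<alpha> + 1) * p))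
        = sphere_measure * abs_pow p (log_profile k s)" for s
      by (rule log_polar_density_radial[OF k])
  qed (auto simp: abs_pow_nonneg)
qed

lemma nn_integral_radial_log_distance:
  assumes p: "p > 0" and k: "k * p = Q - p - \<alpha> * p" and R: "R > 0"
  shows "(\<integral>\<^sup>+ x. ennreal (\<bar>f x - (R powr k * ft R) * N x powr (- k)\<bar> powr p
      / (\<bar>ln (R / N x)\<bar> powr p * N x powr ((\<alpha> + 1) * p))) \<partial>lborel)
    = ennreal sphere_measure * (\<integral>\<^sup>+ s. ennreal (diff_quotient_pow (log_profile k) p (- ln R) s) \<partial>lborel)"
proof (rule nn_integral_log_polar_eq[where h="\<lambda>s. \<bar>ft (exp (- s)) - (R powr k * ft R) * exp (- s) powr (- k)\<bar> powr p
      / (\<bar>ln (R / exp (- s))\<bar> powr p * exp (- s) powr ((\<alpha> + 1) * p))"])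
  show "log_polar_density s * (\<bar>ft (exp (- s)) - (R powr k * ft R) * exp (- s) powr (- k)\<bar> powr p
      / (\<bar>ln (R / exp (- s))\<bar> powr p * exp (- s) powr ((\<alpha> + 1) * p)))
    = sphere_measure * diff_quotient_pow (log_profile k) p (- ln R) s" for s
    using k R by (rule log_polar_density_log_distance)
  show "(\<lambda>s. diff_quotient_pow (log_profile k) p (- ln R) s) \<in> borel_measurable borel"
    unfolding diff_quotient_pow_def log_profile_def using p by measurable
qed (use N_pos in \<open>auto simp: radial diff_quotient_pow_def abs_pow_nonneg\<close>)

lemma hardy_remainder_eq:
  assumes p: "p > 0" and k: "k * p = Q - p - \<alpha> * p"
  shows "(\<integral>x. \<bar>radial_deriv nu N f x\<bar> powr p / N x powr (\<alpha> * p) \<partial>lborel)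
      - k powr p * (\<integral>x. \<bar>f x\<bar> powr p / N x powr ((\<alpha> + 1) * p) \<partial>lborel)
    = sphere_measure * ((\<integral>s. abs_pow p (log_profile_deriv k s + k * log_profile k s) \<partial>lborel)
      - k powr p * (\<integral>s. abs_pow p (log_profile k s) \<partial>lborel))"
  unfolding integral_radial_deriv_pow[OF p k] integral_radial_pow[OF p k] by (simp add: algebra_simps)

lemma hardy_remainder_nonneg:
  assumes p: "p \<ge> 2" and k: "k \<ge> 0" "k * p = Q - p - \<alpha> * p"
  shows "0 \<le> (\<integral>x. \<bar>radial_deriv nu N f x\<bar> powr p / N x powr (\<alpha> * p) \<partial>lborel)
      - k powr p * (\<integral>x. \<bar>f x\<bar> powr p / N x powr ((\<alpha> + 1) * p) \<partial>lborel)"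
proof -
  obtain a b where "C1_compact_support (log_profile k) (log_profile_deriv k) a b"
    by (rule log_profile_C1_compact_support)
  then interpret v: C1_compact_support "log_profile k" "log_profile_deriv k" a b .
  have "0 \<le> cp p * (\<integral>s. abs_pow p (log_profile_deriv k s) \<partial>lborel)"
    using cp_nonneg[OF p] by (auto intro!: integral_nonneg simp: abs_pow_nonneg)
  then show ?thesis
    using v.integral_abs_pow_deriv_plus_ge[OF p k(1)] p sphere_measure_nonneg
    by (simp add: hardy_remainder_eq[OF _ k(2)])
qed

lemma log_distance_le_hardy_remainder:
  assumes p: "p \<ge> 2" and k: "k \<ge> 0" "k * p = Q - p - \<alpha> * p" and R: "R > 0"
  shows "ennreal (cp p * ((p - 1) / p) powr p) * (\<integral>\<^sup>+ x. ennreal (\<bar>f x - (R powr k * ft R) * N x powr (- k)\<bar> powr p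
      / (\<bar>ln (R / N x)\<bar> powr p * N x powr ((\<alpha> + 1) * p))) \<partial>lborel)
    \<le> ennreal ((\<integral>x. \<bar>radial_deriv nu N f x\<bar> powr p / N x powr (\<alpha> * p) \<partial>lborel)
      - k powr p * (\<integral>x. \<bar>f x\<bar> powr p / N x powr ((\<alpha> + 1) * p) \<partial>lborel))"
proof -
  obtain a b where "C1_compact_support (log_profile k) (log_profile_deriv k) a b"
    by (rule log_profile_C1_compact_support)
  then interpret v: C1_compact_support "log_profile k" "log_profile_deriv k" a b .
  have p0: "p > 0" using p by simp
  show ?thesis
    unfolding nn_integral_radial_log_distance[OF p0 k(2) R] hardy_remainder_eq[OF p0 k(2)]
    using mult_left_mono[OF v.diff_quotient_le_remainder[OF p k(1), of "- ln R"], of "ennreal sphere_measure"]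
    by (simp add: ennreal_mult' sphere_measure_nonneg mult_ac)
qed

end

lemma ereal_mult_SUP_le:
  fixes g :: "'b \<Rightarrow> ennreal"
  assumes "A \<noteq> {}" "c \<ge> 0" "X \<ge> 0" and le: "\<And>R. R \<in> A \<Longrightarrow> ennreal c * g R \<le> ennreal X"
  shows "ereal c * (SUP R\<in>A. enn2ereal (g R)) \<le> ereal X"
proof -
  have "ereal c * enn2ereal (g R) \<le> ereal X" if "R \<in> A" for R
  proof -
    have "ereal c * enn2ereal (g R) = enn2ereal (ennreal c * g R)"
      using assms(2) by (simp add: times_ennreal.rep_eq)
    also have "\<dots> \<le> enn2ereal (ennreal X)"
      using le[OF that] by (simp add: less_eq_ennreal.rep_eq)
    finally show ?thesis using assms(3) by simp
  qed
  then show ?thesis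
    using assms(1,2) by (subst SUP_ereal_mult_left[symmetric]) (auto intro: SUP_least)
qed

theorem theorem4p1:
  fixes gmul :: "'a::euclidean_space \<Rightarrow> 'a \<Rightarrow> 'a"
    and nu :: "'a \<Rightarrow> real"
    and N :: "'a \<Rightarrow> real"
    and p \<alpha> :: real
    and f :: "'a \<Rightarrow> real"
    and ft :: "real \<Rightarrow> real"
  assumes G: "homogeneous_group gmul nu"
    and Q3: "hom_dim nu \<ge> 3"
    and N: "hom_quasi_norm nu N"
    and p: "2 \<le> p" "p < hom_dim nu"
    and \<alpha>: "\<alpha> < (hom_dim nu - p) / p"
    and f: "C0_infty_punctured f"
    and radial: "\<forall>x. f x = ft (N x)"
  shows
    "ereal (Inf ((\<lambda>t. (1 - t) powr p - t powr p + p * t powr (p - 1)) ` {0<..1/2})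
              * ((p - 1) / p) powr p)
       * (SUP R\<in>{0<..}. enn2ereal (\<integral>\<^sup>+ x.
            ennreal (\<bar>f x - (R powr ((hom_dim nu - p - \<alpha> * p) / p) * ft R)
                          * N x powr (- (hom_dim nu - p - \<alpha> * p) / p)\<bar> powr p
                     / (\<bar>ln (R / N x)\<bar> powr p * N x powr ((\<alpha> + 1) * p))) \<partial>lborel))
     \<le> ereal ((\<integral>x. \<bar>radial_deriv nu N f x\<bar> powr p / N x powr (\<alpha> * p) \<partial>lborel)
              - ((hom_dim nu - p - \<alpha> * p) / p) powr p
                * (\<integral>x. \<bar>f x\<bar> powr p / N x powr ((\<alpha> + 1) * p) \<partial>lborel))"
proof -
  interpret radial_test_function nu N f ft
    using G N f radial by unfold_locales (auto simp: homogeneous_group_def)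
  define k where "k = (Q - p - \<alpha> * p) / p"
  have k: "k \<ge> 0" "k * p = Q - p - \<alpha> * p"
    using p \<alpha> by (auto simp: k_def field_simps)
  show ?thesis
    unfolding cp_def[symmetric] minus_divide_left[symmetric] k_def[symmetric]
    using log_distance_le_hardy_remainder[OF p(1) k] hardy_remainder_nonneg[OF p(1) k] cp_nonneg[OF p(1)]
    by (intro ereal_mult_SUP_le) auto
qed

end
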